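(* Let $n,k,t$ be positive integers with $k<n$, let $q$ be a prime power, and let $\mathcal{D}$ be the Desarguesian $(t-1)$-spread of $\mathrm{PG}(nt-1,q)$. Let $\Omega$ be an $(nt-kt-2)$-dimensional subspace of $\mathrm{PG}(nt-1,q)$, let $\Gamma$ be a plane of $\mathrm{PG}(nt-1,q)$ skew from $\Omega$, and let $\bar{B}$ be a minimal blocking set (with respect to lines) of the plane $\Gamma$ such that every point of $\bar{B}$ lies on at least $2$ tangent lines to $\bar{B}$ in $\Gamma$. Let $K$ be the cone with vertex $\Omega$ and base $\bar{B}$. Then $\mathcal{B}(K)$ is a minimal blocking set with respect to $(k-1)$-dimensional subspaces of $\mathrm{PG}(n-1,q^t)$.
   Context: Field reduction: each point of $\mathrm{PG}(n-1,q^t)$ is a $1$-dimensional $\mathbb{F}_{q^t}$-subspace of $\mathbb{F}_{q^t}^n$, which is a $t$-dimensional $\mathbb{F}_q$-subspace of $\mathbb{F}_q^{nt}$, i.e. a $(t-1)$-dimensional subspace of $\mathrm{PG}(nt-1,q)$; the set $\mathcal{D}$ of all these $(t-1)$-spaces partitions the points of $\mathrm{PG}(nt-1,q)$ and is called the Desarguesian $(t-1)$-spread. For $U\subseteq \mathrm{PG}(nt-1,q)$, $\mathcal{B}(U)$ denotes the set of elements of $\mathcal{D}$ meeting $U$, identified with the corresponding set of points of $\mathrm{PG}(n-1,q^t)$. The cone with vertex a subspace $\Omega$ and base a point set $\bar{B}$ contained in a subspace skew from $\Omega$ is $\bigcup_{P\in\bar{B}}\langle P,\Omega\rangle$. A blocking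 set with respect to $j$-spaces is a set of points meeting every $j$-dimensional subspace; it is minimal if no proper subset has this property. A tangent line to a planar point set $\bar{B}$ is a line meeting $\bar{B}$ in exactly one point. *)

theory Defs
  imports "HOL-Analysis.Analysis"
begin

text \<open>The ambient vector space is \<open>'a ^ 'n\<close> where
  \<open>'a\<close> is a finite field of order q^t and \<open>CARD('n) = n\<close>.  Viewed over
  the subfield \<open>Fq\<close> of order q it is the vector space underlying PG(nt-1,q);
  viewed over \<open>'a\<close> it underlies PG(n-1,q^t).  Subspaces are represented as
  sets of vectors; a scalar set F selects the base field (\<open>Fq\<close> or \<open>UNIV\<close>).\<close>

definition subfield_q :: "nat \<Rightarrow> ('a::field) set" where
  "subfield_q q = {x. x ^ q = x}"

definition span_over :: "'a::field set \<Rightarrow> ('a ^ 'n) set \<Rightarrow> ('a ^ 'n) set" where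
  "span_over F X = {\<Sum>v\<in>Y. c v *s v | Y c. finite Y \<and> Y \<subseteq> X \<and> (\<forall>v\<in>Y. c v \<in> F)}"

definition indep_over :: "'a::field set \<Rightarrow> ('a ^ 'n) set \<Rightarrow> bool" where
  "indep_over F X = (\<forall>Y c. finite Y \<and> Y \<subseteq> X \<and> (\<forall>v\<in>Y. c v \<in> F)
      \<and> (\<Sum>v\<in>Y. c v *s v) = 0 \<longrightarrow> (\<forall>v\<in>Y. c v = 0))"

text \<open>\<open>vsub F d S\<close>: S is an F-subspace of vector dimension d
  (i.e. a projective (d-1)-space).\<close>
definition vsub :: "'a::field set \<Rightarrow> nat \<Rightarrow> ('a ^ 'n) set \<Rightarrow> bool" where
  "vsub F d S = (\<exists>B. finite B \<and> card B = d \<and> indep_over F B \<and> span_over F B = S)"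

definition proj_points :: "'a::field set \<Rightarrow> ('a ^ 'n) set set" where
  "proj_points F = {P. vsub F 1 P}"

definition blocking :: "('a ^ 'n) set set \<Rightarrow> ('a ^ 'n) set set \<Rightarrow> ('a ^ 'n) set set \<Rightarrow> bool" where
  "blocking Pts Subs A = (A \<subseteq> Pts \<and> (\<forall>W\<in>Subs. \<exists>P\<in>A. P \<subseteq> W))"

definition minimal_blocking :: "('a ^ 'n) set set \<Rightarrow> ('a ^ 'n) set set \<Rightarrow> ('a ^ 'n) set set \<Rightarrow> bool" where
  "minimal_blocking Pts Subs A = (blocking Pts Subs A \<and> (\<forall>A'. A' \<subset> A \<longrightarrow> \<not> blocking Pts Subs A'))"

definition cone :: "'a::field set \<Rightarrow> ('a ^ 'n) set \<Rightarrow> ('a ^ 'n) set set \<Rightarrow> ('a ^ 'n) set set" where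
  "cone F \<Omega> Bb = (\<Union>P\<in>Bb. {Q \<in> proj_points F. Q \<subseteq> span_over F (P \<union> \<Omega>)})"

text \<open>\<open>\<B>(U)\<close>: the elements of the Desarguesian spread (= points of PG(n-1,q^t),
  i.e. 1-dimensional 'a-subspaces) meeting the Fq-point set U.\<close>
definition spread_B :: "('a::field ^ 'n) set set \<Rightarrow> ('a ^ 'n) set set" where
  "spread_B U = {X \<in> proj_points UNIV. \<exists>Q\<in>U. Q \<subseteq> X}"

end

theory Submission
  imports Defs "HOL-Computational_Algebra.Polynomial" "HOL-Computational_Algebra.Primes"
begin

text \<open>
  Field reduction turns a \<open>(k-1)\<close>-space of \<open>PG(n-1,q^t)\<close> into a \<open>(kt-1)\<close>-space of
  \<open>PG(nt-1,q)\<close>, which by a dimension count meets \<open>S = \<langle>\<Gamma>, \<Omega>\<rangle>\<close> in at least a line.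
  That line either meets the vertex \<open>\<Omega>\<close> or projects from \<open>\<Omega>\<close> onto a line of \<open>\<Gamma>\<close>, which
  contains a point of \<open>\<B>\<close>; so \<open>\<B>(K)\<close> is blocking.

  For minimality, every spread element \<open>X\<close> meeting the cone \<open>K\<close> is extended, one
  \<open>F\<^sub>q\<^sub>t\<close>-vector at a time, to a \<open>(k-1)\<close>-space \<open>W\<close> with \<open>W \<inter> K \<subseteq> X\<close>. While the current subspace
  \<open>Z\<close> is small, the \<open>F\<^sub>q\<^sub>t\<close>-multiples of \<open>Z + S\<close> do not cover the space, and any vector
  outside them keeps \<open>Z \<inter> S\<close> unchanged. If \<open>X \<inter> S\<close> is a single point on \<open>\<langle>P, \<Omega>\<rangle>\<close>, the
  last vector is taken on one of the hyperplanes \<open>\<langle>l, \<Omega>\<rangle>\<close> of \<open>S\<close> through a tangent line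
  \<open>l\<close> at \<open>P\<close>; these meet \<open>K\<close> only in \<open>\<langle>P, \<Omega>\<rangle>\<close>, and counting over the pencil of
  \<open>(k-1)\<close>-spaces through \<open>Z\<close> shows that some such choice meets \<open>S\<close> in just a line.
\<close>

section \<open>Finite fields\<close>

lemma finite_field_power_card: "(x::'a::{field,finite}) ^ CARD('a) = x"
proof (cases "x = 0")
  case False
  have "(\<Prod>y\<in>UNIV - {0}. x * y) = (\<Prod>y\<in>UNIV - {0::'a}. y)"
    using False by (intro prod.reindex_bij_witness[of _ "\<lambda>y. y / x" "\<lambda>y. x * y"]) auto
  then have "x ^ card (UNIV - {0::'a}) = 1"
    by (simp add: prod.distrib)
  then have "x * x ^ (CARD('a) - 1) = x"
    by (simp add: card_Diff_singleton)
  moreover have "Suc (CARD('a) - 1) = CARD('a)"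
    using finite_UNIV_card_ge_0[where ?'a = 'a] by simp
  ultimately show ?thesis
    by (metis power_Suc)
qed (use finite_UNIV_card_ge_0[where ?'a = 'a] in simp)

lemma of_nat_card_finite_field: "(of_nat CARD('a) :: 'a::{field,finite}) = 0"
proof -
  have "(\<Sum>y\<in>UNIV. 1 + y) = (\<Sum>y\<in>UNIV. y :: 'a)"
    by (rule sum.reindex_bij_witness[of _ "\<lambda>y. y - 1" "\<lambda>y. 1 + y"]) auto
  then show ?thesis
    by (simp add: sum.distrib)
qed

lemma CHAR_finite_field_eq_prime:
  assumes "prime p" "m > 0" "CARD('a::{field,finite}) = p ^ m"
  shows "CHAR('a) = p"
proof -
  have "(of_nat p :: 'a) ^ m = 0"
    using of_nat_card_finite_field[where 'a = 'a] assms(3) by (simp add: of_nat_power)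
  then have "CHAR('a) dvd p"
    using assms(2) of_nat_eq_0_iff_char_dvd by auto
  then show ?thesis
    using assms(1) CHAR_not_1 by (metis One_nat_def prime_nat_iff)
qed

definition is_subfield :: "'a::field set \<Rightarrow> bool" where
  "is_subfield F \<longleftrightarrow> 0 \<in> F \<and> 1 \<in> F \<and> (\<forall>a\<in>F. \<forall>b\<in>F. a + b \<in> F \<and> a * b \<in> F)
     \<and> (\<forall>a\<in>F. - a \<in> F) \<and> (\<forall>a\<in>F. inverse a \<in> F)"

lemma is_subfieldD:
  assumes "is_subfield F"
  shows "0 \<in> F" "1 \<in> F" "a \<in> F \<Longrightarrow> b \<in> F \<Longrightarrow> a + b \<in> F" "a \<in> F \<Longrightarrow> b \<in> F \<Longrightarrow> a * b \<in> F"
    "a \<in> F \<Longrightarrow> - a \<in> F" "a \<in> F \<Longrightarrow> inverse a \<in> F"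
  using assms unfolding is_subfield_def by auto

lemma is_subfield_UNIV: "is_subfield UNIV"
  by (simp add: is_subfield_def)

lemma two_le_card_subfield:
  assumes "is_subfield (F :: 'a::{field,finite} set)"
  shows "2 \<le> card F"
proof -
  have "{0, 1} \<subseteq> F"
    using is_subfieldD(1,2)[OF assms] by simp
  then show ?thesis
    using card_mono[of F "{0, 1 :: 'a}"] by simp
qed

lemma is_subfield_subfield_q:
  assumes "prime CHAR('a::field)" "q = CHAR('a) ^ e"
  shows "is_subfield (subfield_q q :: 'a set)"
proof -
  have frob: "(x + y) ^ q = x ^ q + y ^ q" for x y :: 'a
    by (rule freshmans_dream'[OF assms])
  have "q > 0"
    using assms prime_gt_0_nat by simp
  then have zero: "(0::'a) ^ q = 0"
    by simp
  have neg: "(- a) ^ q = - a" if "a ^ q = a" for a :: 'a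
  proof -
    have "(- a + a) ^ q = (- a) ^ q + a ^ q"
      by (rule frob)
    then show ?thesis
      using zero that by (simp add: eq_neg_iff_add_eq_0)
  qed
  show ?thesis
    unfolding is_subfield_def subfield_q_def
    using zero neg by (auto simp: frob power_mult_distrib power_inverse)
qed

lemma card_subfield_q_le:
  assumes "2 \<le> q"
  shows "card (subfield_q q :: 'a::field set) \<le> q"
proof -
  define g :: "'a poly" where "g = monom 1 q - [:0, 1:]"
  have "coeff g q = 1"
    using assms by (simp add: g_def coeff_pCons split: nat.splits)
  then have "g \<noteq> 0"
    by auto
  moreover have "degree g \<le> q"
    unfolding g_def using assms
    by (intro degree_diff_le) (auto simp: degree_monom_le degree_pCons_eq_if)
  moreover have "subfield_q q = {x. poly g x = 0}"
    by (auto simp: subfield_q_def g_def poly_monom)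
  ultimately show ?thesis
    using card_poly_roots_bound[of g] by simp
qed

lemma diff_one_mult_sum_powers:
  fixes q :: nat
  assumes "1 \<le> q"
  shows "(q - 1) * (\<Sum>i<t. q ^ i) = q ^ t - 1"
proof -
  have "int ((q - 1) * (\<Sum>i<t. q ^ i)) = (int q - 1) * (\<Sum>i<t. int q ^ i)"
    using assms by (simp add: of_nat_diff)
  also have "\<dots> = int (q ^ t - 1)"
    using assms by (simp add: power_diff_1_eq of_nat_diff)
  finally show ?thesis
    by linarith
qed

text \<open>For \<open>x\<close> outside the subfield, \<open>y = x^(q-1) \<noteq> 1\<close> but \<open>y^a = x^(q^t - 1) = 1\<close> with
  \<open>a = (q^t - 1)/(q - 1)\<close>, so \<open>1 + y + \<dots> + y^(a-1) = 0\<close>.\<close>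

lemma sum_powers_eq_0_of_not_in_subfield_q:
  assumes q: "2 \<le> q" and card: "CARD('a::{field,finite}) = q ^ t"
    and x: "(x::'a) \<notin> subfield_q q"
  shows "(\<Sum>i<(\<Sum>j<t. q ^ j). (x ^ (q - 1)) ^ i) = 0"
proof -
  define a where "a = (\<Sum>j<t. q ^ j)"
  define y where "y = x ^ (q - 1)"
  have qa: "(q - 1) * a = q ^ t - 1"
    unfolding a_def using q by (intro diff_one_mult_sum_powers) simp
  have x0: "x \<noteq> 0"
    using x q by (auto simp: subfield_q_def)
  have "Suc (q - 1) = q"
    using q by simp
  then have "x * y = x ^ q"
    unfolding y_def by (metis power_Suc)
  then have y1: "y \<noteq> 1"
    using x by (auto simp: subfield_q_def)
  have "Suc (q ^ t - 1) = CARD('a)"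
    using card q by simp
  then have "x * x ^ (q ^ t - 1) = x ^ CARD('a)"
    by (metis power_Suc)
  then have "x * x ^ (q ^ t - 1) = x * 1"
    by (simp add: finite_field_power_card)
  then have "y ^ a = 1"
    unfolding y_def using x0 qa by (simp flip: power_mult)
  moreover have "(y - 1) * (\<Sum>i<a. y ^ i) = y ^ a - 1"
    by (simp add: power_diff_1_eq)
  ultimately show ?thesis
    using y1 unfolding a_def y_def by simp
qed

lemma card_subfield_q_ge:
  assumes q: "2 \<le> q" and t: "0 < t" and card: "CARD('a::{field,finite}) = q ^ t"
  shows "q \<le> card (subfield_q q :: 'a set)"
proof -
  define a where "a = (\<Sum>i<t. q ^ i)"
  have "q ^ 0 \<le> a"
    unfolding a_def using t by (intro member_le_sum) auto
  then have a1: "1 \<le> a"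
    by simp
  define h :: "'a poly" where "h = (\<Sum>i<a. monom 1 (i * (q - 1)))"
  have poly_h: "poly h x = (\<Sum>i<a. (x ^ (q - 1)) ^ i)" for x
    unfolding h_def poly_sum poly_monom
    by (rule sum.cong) (auto simp flip: power_mult simp: mult.commute)
  have "coeff h 0 = (\<Sum>i<a. if i = 0 then 1 else 0)"
    unfolding h_def coeff_sum using q by (intro sum.cong) (auto simp: coeff_monom)
  then have "coeff h 0 = 1"
    using a1 by (simp add: sum.delta)
  then have h0: "h \<noteq> 0"
    by auto
  have deg_h: "degree h \<le> (a - 1) * (q - 1)"
    unfolding h_def
  proof (intro degree_sum_le)
    fix i assume "i \<in> {..<a}"
    then have "i * (q - 1) \<le> (a - 1) * (q - 1)"
      by (intro mult_right_mono) auto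
    then show "degree (monom (1::'a) (i * (q - 1))) \<le> (a - 1) * (q - 1)"
      using degree_monom_le order.trans by blast
  qed simp
  have "x \<in> subfield_q q \<union> {x. poly h x = 0}" for x :: 'a
    using sum_powers_eq_0_of_not_in_subfield_q[OF q card, of x] unfolding poly_h a_def by blast
  then have "q ^ t \<le> card (subfield_q q \<union> {x :: 'a. poly h x = 0})"
    unfolding card[symmetric] by (intro card_mono) auto
  also have "\<dots> \<le> card (subfield_q q :: 'a set) + card {x :: 'a. poly h x = 0}"
    by (rule card_Un_le)
  finally have "q ^ t \<le> card (subfield_q q :: 'a set) + (a - 1) * (q - 1)"
    using card_poly_roots_bound[OF h0] deg_h by linarith
  moreover have "(a - 1) * (q - 1) = q ^ t - q"
  proof -
    have "(q - 1) * a = q ^ t - 1"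
      unfolding a_def using q by (intro diff_one_mult_sum_powers) simp
    moreover have "(a - 1) * (q - 1) = (q - 1) * a - (q - 1)"
      by (metis mult.commute diff_mult_distrib2 mult_1_right)
    ultimately show ?thesis
      using q by simp
  qed
  moreover have "q \<le> q ^ t"
    using q t by (simp add: self_le_power)
  ultimately show ?thesis
    by linarith
qed

lemma card_subfield_q:
  assumes "2 \<le> q" "0 < t" "CARD('a::{field,finite}) = q ^ t"
  shows "card (subfield_q q :: 'a set) = q"
  using card_subfield_q_le[OF assms(1)] card_subfield_q_ge[OF assms] by (rule antisym)

section \<open>Subspaces over a subfield\<close>

definition subspace_over :: "'a::field set \<Rightarrow> ('a ^ 'n) set \<Rightarrow> bool" where
  "subspace_over F S \<longleftrightarrow> 0 \<in> S \<and> (\<forall>x\<in>S. \<forall>y\<in>S. x + y \<in> S) \<and> (\<forall>c\<in>F. \<forall>x\<in>S. c *s x \<in> S)"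

lemma subspace_overD:
  assumes "subspace_over F S"
  shows "0 \<in> S" "x \<in> S \<Longrightarrow> y \<in> S \<Longrightarrow> x + y \<in> S" "c \<in> F \<Longrightarrow> x \<in> S \<Longrightarrow> c *s x \<in> S"
  using assms unfolding subspace_over_def by auto

lemma subspace_over_neg:
  assumes "is_subfield F" "subspace_over F S" "x \<in> S"
  shows "- x \<in> S"
proof -
  have "(- 1) *s x \<in> S"
    using subspace_overD(3)[OF assms(2) is_subfieldD(5)[OF assms(1) is_subfieldD(2)[OF assms(1)]] assms(3)] .
  then show ?thesis
    by (simp only: vector_sneg_minus1[of x])
qed

lemma subspace_over_diff:
  assumes "is_subfield F" "subspace_over F S" "x \<in> S" "y \<in> S"
  shows "x - y \<in> S"
  using subspace_overD(2)[OF assms(2,3) subspace_over_neg[OF assms(1,2,4)]] by simp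

lemma subspace_over_UNIV_imp: "subspace_over UNIV S \<Longrightarrow> subspace_over F S"
  unfolding subspace_over_def by auto

lemma subspace_over_Int: "subspace_over F A \<Longrightarrow> subspace_over F B \<Longrightarrow> subspace_over F (A \<inter> B)"
  unfolding subspace_over_def by auto

lemma subspace_over_set_plus:
  assumes "subspace_over F A" "subspace_over F B"
  shows "subspace_over F (A + B)"
  unfolding subspace_over_def
proof (intro conjI ballI)
  show "0 \<in> A + B"
    using subspace_overD(1)[OF assms(1)] subspace_overD(1)[OF assms(2)] set_plus_intro by fastforce
next
  fix x y assume "x \<in> A + B" "y \<in> A + B"
  then obtain a b a' b' where "a \<in> A" "b \<in> B" "x = a + b" "a' \<in> A" "b' \<in> B" "y = a' + b'"
    by (auto elim!: set_plus_elim)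
  moreover have "x + y = (a + a') + (b + b')" if "x = a + b" "y = a' + b'"
    using that by (simp add: algebra_simps)
  ultimately show "x + y \<in> A + B"
    using subspace_overD(2)[OF assms(1), of a a'] subspace_overD(2)[OF assms(2), of b b']
    by (metis set_plus_intro)
next
  fix c x assume c: "c \<in> F" and "x \<in> A + B"
  then obtain a b where "a \<in> A" "b \<in> B" "x = a + b"
    by (auto elim!: set_plus_elim)
  then show "c *s x \<in> A + B"
    using subspace_overD(3)[OF assms(1) c] subspace_overD(3)[OF assms(2) c]
    by (auto simp: vector_add_ldistrib intro!: set_plus_intro)
qed

lemma subset_set_plus_left: "0 \<in> B \<Longrightarrow> A \<subseteq> A + (B :: 'a::comm_monoid_add set)"
  using set_zero_plus2[of B A] by (simp add: add.commute)

lemma set_plus_subset_subspace_over: "subspace_over F S \<Longrightarrow> A \<subseteq> S \<Longrightarrow> B \<subseteq> S \<Longrightarrow> A + B \<subseteq> S"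
  unfolding set_plus_def using subspace_overD(2) by blast

lemma subspace_over_sum:
  assumes "subspace_over F S" "\<And>v. v \<in> Y \<Longrightarrow> f v \<in> S"
  shows "sum f Y \<in> S"
  using assms(2) by (induct Y rule: infinite_finite_induct) (auto intro: subspace_overD[OF assms(1)])

lemma smult_sum: "(c::'a::field) *s sum f Y = (\<Sum>v\<in>Y. c *s f v)"
  by (induct Y rule: infinite_finite_induct) (auto simp: vector_add_ldistrib)

lemma sum_smult_restrict:
  assumes "finite Y" "Y1 \<subseteq> Y"
  shows "(\<Sum>v\<in>Y. (if v \<in> Y1 then c v else 0) *s v) = (\<Sum>v\<in>Y1. c v *s (v::'a::field^'n))"
  by (rule sum.mono_neutral_cong_right) (use assms in auto)

lemma subspace_span_over:
  assumes F: "is_subfield F"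
  shows "subspace_over F (span_over F X)"
  unfolding subspace_over_def
proof (intro conjI ballI)
  show "0 \<in> span_over F X"
    unfolding span_over_def by (rule CollectI, rule exI[of _ "{}"]) auto
next
  fix x y assume "x \<in> span_over F X" "y \<in> span_over F X"
  then obtain Y1 c1 Y2 c2 where 1: "finite Y1" "Y1 \<subseteq> X" "\<forall>v\<in>Y1. c1 v \<in> F" "x = (\<Sum>v\<in>Y1. c1 v *s v)"
    and 2: "finite Y2" "Y2 \<subseteq> X" "\<forall>v\<in>Y2. c2 v \<in> F" "y = (\<Sum>v\<in>Y2. c2 v *s v)"
    unfolding span_over_def by blast
  define c where "c v = (if v \<in> Y1 then c1 v else 0) + (if v \<in> Y2 then c2 v else 0)" for v
  have "x + y = (\<Sum>v\<in>Y1 \<union> Y2. c v *s v)"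
    unfolding c_def vector_sadd_rdistrib sum.distrib
    using sum_smult_restrict[of "Y1 \<union> Y2" Y1 c1] sum_smult_restrict[of "Y1 \<union> Y2" Y2 c2] 1 2 by simp
  moreover have "\<forall>v\<in>Y1 \<union> Y2. c v \<in> F"
    using 1 2 is_subfieldD[OF F] unfolding c_def by auto
  ultimately show "x + y \<in> span_over F X"
    unfolding span_over_def using 1 2 by (intro CollectI exI[of _ "Y1 \<union> Y2"] exI[of _ c]) auto
next
  fix d x assume d: "d \<in> F" and "x \<in> span_over F X"
  then obtain Y c where 1: "finite Y" "Y \<subseteq> X" "\<forall>v\<in>Y. c v \<in> F" "x = (\<Sum>v\<in>Y. c v *s v)"
    unfolding span_over_def by blast
  have "d *s x = (\<Sum>v\<in>Y. (d * c v) *s v)"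
    using 1 by (simp add: smult_sum vector_smult_assoc)
  then show "d *s x \<in> span_over F X"
    unfolding span_over_def using 1 d is_subfieldD[OF F]
    by (intro CollectI exI[of _ Y] exI[of _ "\<lambda>v. d * c v"]) auto
qed

lemma span_over_minimal:
  assumes "subspace_over F S" "X \<subseteq> S"
  shows "span_over F X \<subseteq> S"
proof
  fix x assume "x \<in> span_over F X"
  then obtain Y c where "finite Y" "Y \<subseteq> X" "\<forall>v\<in>Y. c v \<in> F" "x = (\<Sum>v\<in>Y. c v *s v)"
    unfolding span_over_def by blast
  then show "x \<in> S"
    using assms by (auto intro!: subspace_over_sum[OF assms(1)] subspace_overD(3)[OF assms(1)])
qed

lemma span_over_superset:
  assumes "1 \<in> F"
  shows "X \<subseteq> span_over F X"
proof
  fix x assume "x \<in> X"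
  then show "x \<in> span_over F X"
    unfolding span_over_def using assms by (intro CollectI exI[of _ "{x}"] exI[of _ "\<lambda>_. 1"]) auto
qed

lemma span_over_mono: "X \<subseteq> X' \<Longrightarrow> span_over F X \<subseteq> span_over F X'"
  unfolding span_over_def by blast

lemma span_over_mono_scalars: "F \<subseteq> F' \<Longrightarrow> span_over F X \<subseteq> span_over F' X"
  unfolding span_over_def by blast

lemma span_over_insert:
  assumes F: "is_subfield F"
  shows "span_over F (insert v B) = {z + c *s v | z c. z \<in> span_over F B \<and> c \<in> F}"
proof
  have S: "subspace_over F (span_over F (insert v B))"
    by (rule subspace_span_over[OF F])
  have "span_over F B \<subseteq> span_over F (insert v B)" "v \<in> span_over F (insert v B)"
    using span_over_mono[of B "insert v B" F] span_over_superset[OF is_subfieldD(2)[OF F], of "insert v B"]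
    by auto
  then show "{z + c *s v | z c. z \<in> span_over F B \<and> c \<in> F} \<subseteq> span_over F (insert v B)"
    using subspace_overD(2,3)[OF S] by blast
next
  show "span_over F (insert v B) \<subseteq> {z + c *s v | z c. z \<in> span_over F B \<and> c \<in> F}"
  proof
    fix x assume "x \<in> span_over F (insert v B)"
    then obtain Y c where 1: "finite Y" "Y \<subseteq> insert v B" "\<forall>v\<in>Y. c v \<in> F" "x = (\<Sum>v\<in>Y. c v *s v)"
      unfolding span_over_def by blast
    have z: "(\<Sum>w\<in>Y - {v}. c w *s w) \<in> span_over F B"
      unfolding span_over_def using 1 by (intro CollectI exI[of _ "Y - {v}"] exI[of _ c]) auto
    show "x \<in> {z + c *s v | z c. z \<in> span_over F B \<and> c \<in> F}"
    proof (cases "v \<in> Y")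
      case True
      then have "x = (\<Sum>w\<in>Y - {v}. c w *s w) + c v *s v"
        using 1 sum.remove[of Y v "\<lambda>w. c w *s w"] by (simp add: add.commute)
      then show ?thesis
        using z 1 True by blast
    next
      case False
      then have "x = (\<Sum>w\<in>Y - {v}. c w *s w) + 0 *s v"
        using 1 by simp
      then show ?thesis
        using z is_subfieldD(1)[OF F] by blast
    qed
  qed
qed

lemma span_over_singleton:
  assumes "is_subfield F"
  shows "span_over F {v} = {c *s v | c. c \<in> F}"
  using span_over_insert[OF assms, of v "{}"] by (auto simp: span_over_def)

lemma span_over_Un:
  assumes F: "is_subfield F" and A: "subspace_over F A" and B: "subspace_over F B"
  shows "span_over F (A \<union> B) = A + B"
proof
  have "A \<subseteq> A + B" "B \<subseteq> A + B"
    using subset_set_plus_left[OF subspace_overD(1)[OF B]] set_zero_plus2[OF subspace_overD(1)[OF A]]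
    by auto
  then show "span_over F (A \<union> B) \<subseteq> A + B"
    by (intro span_over_minimal[OF subspace_over_set_plus[OF A B]]) auto
next
  show "A + B \<subseteq> span_over F (A \<union> B)"
    using set_plus_subset_subspace_over[OF subspace_span_over[OF F]]
      span_over_superset[OF is_subfieldD(2)[OF F]] by (metis le_supE)
qed

lemma indep_over_insert:
  assumes F: "is_subfield F" and B: "indep_over F B" and v: "v \<notin> span_over F B"
  shows "indep_over F (insert v B)"
  unfolding indep_over_def
proof (intro allI impI ballI)
  fix Y c w
  assume H: "finite Y \<and> Y \<subseteq> insert v B \<and> (\<forall>u\<in>Y. c u \<in> F) \<and> (\<Sum>u\<in>Y. c u *s u) = 0"
    and w: "w \<in> Y"
  define z where "z = (\<Sum>u\<in>Y - {v}. c u *s u)"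
  have z: "z \<in> span_over F B"
    unfolding span_over_def z_def using H by (intro CollectI exI[of _ "Y - {v}"] exI[of _ c]) auto
  have sum: "c v *s v + z = 0" if "v \<in> Y"
    using H that sum.remove[of Y v "\<lambda>u. c u *s u"] by (simp add: z_def)
  have cv: "c v = 0" if vY: "v \<in> Y"
  proof (rule ccontr)
    define a where "a = c v"
    assume "c v \<noteq> 0"
    then have a: "a \<noteq> 0" "a \<in> F"
      using H vY by (auto simp: a_def)
    have "a *s v = - z"
      using sum[OF vY] by (simp add: a_def eq_neg_iff_add_eq_0)
    then have "inverse a *s (a *s v) = inverse a *s (- z)"
      by simp
    then have v_eq: "v = (- inverse a) *s z"
      using a(1) by (simp add: vector_smult_rneg vector_smult_lneg)
    have "- inverse a \<in> F"
      using a(2) is_subfieldD(5,6)[OF F] by blast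
    then have "(- inverse a) *s z \<in> span_over F B"
      by (rule subspace_overD(3)[OF subspace_span_over[OF F] _ z])
    then show False
      using v v_eq by simp
  qed
  have "z = 0"
  proof (cases "v \<in> Y")
    case True
    then show ?thesis
      using sum cv by simp
  next
    case False
    then have "Y - {v} = Y"
      by blast
    then show ?thesis
      using H by (simp add: z_def)
  qed
  then have "finite (Y - {v}) \<and> Y - {v} \<subseteq> B \<and> (\<forall>u\<in>Y - {v}. c u \<in> F)
      \<and> (\<Sum>u\<in>Y - {v}. c u *s u) = 0"
    using H by (auto simp: z_def)
  then have "\<forall>u\<in>Y - {v}. c u = 0"
    using B unfolding indep_over_def by blast
  then show "c w = 0"
    using cv w by (cases "w = v") auto
qed

lemma indep_over_singleton:
  assumes "1 \<in> F"
  shows "indep_over F {v} \<longleftrightarrow> v \<noteq> 0"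
proof
  assume I: "indep_over F {v}"
  show "v \<noteq> 0"
  proof
    assume "v = 0"
    then have "finite {v} \<and> {v} \<subseteq> {v} \<and> (\<forall>w\<in>{v}. (\<lambda>_. 1::'a) w \<in> F)
        \<and> (\<Sum>w\<in>{v}. (\<lambda>_. 1::'a) w *s w) = 0"
      using assms by simp
    then show False
      using I[unfolded indep_over_def, rule_format, of "{v}" "\<lambda>_. 1"] by simp
  qed
next
  assume "v \<noteq> 0"
  then show "indep_over F {v}"
    unfolding indep_over_def by (auto simp: subset_singleton_iff)
qed

lemma card_span_over:
  fixes B :: "('a::field ^ 'n) set"
  assumes F: "is_subfield F" and "finite F" "finite B" and ind: "indep_over F B"
  shows "card (span_over F B) = card F ^ card B"
proof -
  define f where "f c = (\<Sum>v\<in>B. c v *s v)" for c :: "'a ^ 'n \<Rightarrow> 'a"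
  have "inj_on f (PiE B (\<lambda>_. F))"
  proof (rule inj_onI)
    fix c d assume c: "c \<in> PiE B (\<lambda>_. F)" and d: "d \<in> PiE B (\<lambda>_. F)" and "f c = f d"
    then have "(\<Sum>v\<in>B. (c v - d v) *s v) = 0"
      unfolding f_def by (simp add: vector_sub_rdistrib sum_subtractf)
    moreover have "c v - d v \<in> F" if "v \<in> B" for v
    proof -
      have "c v + - d v \<in> F"
        using c d that is_subfieldD(3,5)[OF F] by blast
      then show ?thesis
        by (simp only: diff_conv_add_uminus)
    qed
    ultimately have "\<forall>v\<in>B. c v - d v = 0"
      using ind[unfolded indep_over_def, rule_format, of B "\<lambda>v. c v - d v"] assms(3) by blast
    then show "c = d"
      by (intro PiE_ext[OF c d]) simp
  qed
  moreover have "f ` PiE B (\<lambda>_. F) = span_over F B"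
  proof
    show "f ` PiE B (\<lambda>_. F) \<subseteq> span_over F B"
    proof
      fix x assume "x \<in> f ` PiE B (\<lambda>_. F)"
      then obtain c where c: "c \<in> PiE B (\<lambda>_. F)" "x = f c"
        by blast
      then have "\<forall>v\<in>B. c v \<in> F"
        by blast
      then show "x \<in> span_over F B"
        unfolding span_over_def c(2) f_def using assms(3) by (intro CollectI exI[of _ B] exI[of _ c]) simp
    qed
  next
    show "span_over F B \<subseteq> f ` PiE B (\<lambda>_. F)"
    proof
      fix x assume "x \<in> span_over F B"
      then obtain Y c where 1: "finite Y" "Y \<subseteq> B" "\<forall>v\<in>Y. c v \<in> F" "x = (\<Sum>v\<in>Y. c v *s v)"
        unfolding span_over_def by blast
      define c' where "c' = restrict (\<lambda>v. if v \<in> Y then c v else 0) B"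
      have "c' \<in> PiE B (\<lambda>_. F)"
        using 1 is_subfieldD(1)[OF F] unfolding c'_def by auto
      moreover have "f c' = x"
        unfolding f_def c'_def 1(4) using sum_smult_restrict[OF assms(3) 1(2), of c] by simp
      ultimately show "x \<in> f ` PiE B (\<lambda>_. F)"
        by (metis image_eqI)
    qed
  qed
  ultimately have "card (span_over F B) = card (PiE B (\<lambda>_. F))"
    by (metis card_image)
  also have "\<dots> = card F ^ card B"
    using assms(3) by (simp add: card_PiE)
  finally show ?thesis .
qed

lemma vsub_imp_subspace_over:
  assumes "is_subfield F" "finite F" "vsub F d S"
  shows "subspace_over F S" "card S = card F ^ d"
  using assms subspace_span_over card_span_over unfolding vsub_def by auto

lemma vsub_span_over: "finite B \<Longrightarrow> indep_over F B \<Longrightarrow> card B = d \<Longrightarrow> vsub F d (span_over F B)"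
  unfolding vsub_def by blast

lemma vsub_1_E:
  assumes F: "is_subfield F" and "vsub F 1 P"
  obtains p where "p \<noteq> 0" "P = span_over F {p}"
proof -
  obtain B where B: "finite B" "card B = 1" "indep_over F B" "span_over F B = P"
    using assms(2) unfolding vsub_def by blast
  then obtain p where "B = {p}"
    by (metis card_1_singletonE)
  then show ?thesis
    using that B indep_over_singleton[OF is_subfieldD(2)[OF F]] by auto
qed

lemma vsub_1_span_over_singleton:
  assumes "is_subfield F" "p \<noteq> 0"
  shows "vsub F 1 (span_over F {p})"
  by (intro vsub_span_over) (use indep_over_singleton[OF is_subfieldD(2)[OF assms(1)]] assms(2) in auto)

lemma card_span_over_singleton:
  fixes y :: "'a::{field,finite} ^ 'n"
  assumes F: "is_subfield F" and "y \<noteq> 0"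
  shows "card (span_over F {y}) = card F"
proof -
  have "span_over F {y} = (\<lambda>c. c *s y) ` F"
    using span_over_singleton[OF F] by auto
  moreover have "inj_on (\<lambda>c. c *s y) F"
    using assms(2) by (auto intro: inj_onI)
  ultimately show ?thesis
    by (simp add: card_image)
qed

lemma span_over_singleton_eq:
  fixes x u :: "'a::{field,finite} ^ 'n"
  assumes F: "is_subfield F" and "u \<in> span_over F {x}" "u \<noteq> 0"
  shows "span_over F {u} = span_over F {x}"
proof (rule card_seteq)
  show "span_over F {u} \<subseteq> span_over F {x}"
    using assms by (intro span_over_minimal[OF subspace_span_over[OF F]]) auto
  have "x \<noteq> 0"
    using assms span_over_singleton[OF F, of x] by auto
  then show "card (span_over F {x}) \<le> card (span_over F {u})"
    using card_span_over_singleton[OF F \<open>x \<noteq> 0\<close>] card_span_over_singleton[OF F assms(3)] by simp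
qed simp

lemma span_over_singleton_subset_or_Int_eq:
  assumes F: "is_subfield F" and L: "subspace_over F L"
  shows "span_over F {p} \<subseteq> L \<or> span_over F {p} \<inter> L \<subseteq> {0}"
proof (cases "p \<in> L")
  case True
  then show ?thesis
    using span_over_minimal[OF L, of "{p}"] by auto
next
  case False
  have "c *s p \<notin> L" if "c \<in> F" "c \<noteq> 0" for c
    using subspace_overD(3)[OF L is_subfieldD(6)[OF F \<open>c \<in> F\<close>], of "c *s p"] that False
    by (auto simp: vector_smult_assoc)
  then show ?thesis
    using span_over_singleton[OF F, of p] by auto
qed

section \<open>Counting points of subspaces\<close>

definition add_subgroup :: "'a::ab_group_add set \<Rightarrow> bool" where
  "add_subgroup A \<longleftrightarrow> 0 \<in> A \<and> (\<forall>x\<in>A. \<forall>y\<in>A. x + y \<in> A) \<and> (\<forall>x\<in>A. - x \<in> A)"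

lemma add_subgroup_add_diff:
  assumes "add_subgroup A" "x \<in> A" "y \<in> A"
  shows "x + y \<in> A" "x - y \<in> A"
  using assms unfolding add_subgroup_def by (auto simp only: diff_conv_add_uminus)

lemma subspace_over_add_subgroup: "is_subfield F \<Longrightarrow> subspace_over F S \<Longrightarrow> add_subgroup S"
  unfolding add_subgroup_def using subspace_over_neg[of F S] subspace_overD[of F S] by blast

text \<open>Every element of \<open>A + B\<close> has exactly \<open>|A \<inter> B|\<close> representations \<open>a + b\<close>.\<close>

lemma card_set_plus_mult_card_Int:
  fixes A B :: "'a::ab_group_add set"
  assumes fin: "finite A" "finite B" and A: "add_subgroup A" and B: "add_subgroup B"
  shows "card (A + B) * card (A \<inter> B) = card A * card B"
proof -
  define f where "f = (\<lambda>(a, b). a + (b::'a))"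
  have img: "f ` (A \<times> B) = A + B"
    unfolding f_def set_plus_def by auto
  have fibre: "card {ab \<in> A \<times> B. f ab = x} = card (A \<inter> B)" if x: "x \<in> A + B" for x
  proof -
    obtain a0 b0 where ab0: "x = a0 + b0" "a0 \<in> A" "b0 \<in> B"
      using x by (rule set_plus_elim)
    have "bij_betw (\<lambda>c. (a0 + c, b0 - c)) (A \<inter> B) {ab \<in> A \<times> B. f ab = x}"
    proof (rule bij_betwI[where g = "\<lambda>(a, b). a - a0"])
      show "(\<lambda>c. (a0 + c, b0 - c)) \<in> A \<inter> B \<rightarrow> {ab \<in> A \<times> B. f ab = x}"
        using add_subgroup_add_diff[OF A ab0(2)] add_subgroup_add_diff[OF B ab0(3)] ab0(1)
        by (auto simp: f_def)
      show "(\<lambda>(a, b). a - a0) \<in> {ab \<in> A \<times> B. f ab = x} \<rightarrow> A \<inter> B"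
      proof
        fix ab assume "ab \<in> {ab \<in> A \<times> B. f ab = x}"
        then obtain a b where ab: "ab = (a, b)" "a \<in> A" "b \<in> B" "a + b = a0 + b0"
          using ab0(1) by (auto simp: f_def)
        then have "a - a0 = b0 - b"
          by (simp add: algebra_simps)
        then have "a - a0 \<in> A \<inter> B"
          using add_subgroup_add_diff(2)[OF A ab(2) ab0(2)] add_subgroup_add_diff(2)[OF B ab0(3) ab(3)] by simp
        then show "(\<lambda>(a, b). a - a0) ab \<in> A \<inter> B"
          using ab(1) by simp
      qed
      show "(\<lambda>(a, b). a - a0) (a0 + c, b0 - c) = c" for c
        by simp
      show "(a0 + (\<lambda>(a, b). a - a0) ab, b0 - (\<lambda>(a, b). a - a0) ab) = ab"
        if ab: "ab \<in> {ab \<in> A \<times> B. f ab = x}" for ab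
      proof -
        obtain a b where "ab = (a, b)" "a + b = a0 + b0"
          using ab ab0(1) by (auto simp: f_def)
        then show ?thesis
          by (auto simp: algebra_simps)
      qed
    qed
    then show ?thesis
      by (simp add: bij_betw_same_card)
  qed
  have "finite (A + B)"
    unfolding img[symmetric] using fin by simp
  then have "card A * card B = (\<Sum>x\<in>A + B. card {ab \<in> A \<times> B. f ab = x})"
    using sum.group[of "A \<times> B" "A + B" f "\<lambda>_. 1 :: nat"] img fin
    by (simp add: card_cartesian_product)
  also have "\<dots> = card (A + B) * card (A \<inter> B)"
    using fibre by simp
  finally show ?thesis ..
qed

lemma card_mult_card_le_card_Int_mult:
  fixes A B C :: "('a::{field,finite} ^ 'n) set"
  assumes F: "is_subfield F" and "subspace_over F A" "subspace_over F B" "A + B \<subseteq> C"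
  shows "card A * card B \<le> card (A \<inter> B) * card C"
proof -
  have "card (A + B) * card (A \<inter> B) = card A * card B"
    using assms by (intro card_set_plus_mult_card_Int) (auto intro: subspace_over_add_subgroup[OF F])
  moreover have "card (A + B) \<le> card C"
    using assms(4) by (simp add: card_mono)
  ultimately show ?thesis
    by (metis mult.commute mult_le_mono1)
qed

lemma card_set_plus_line:
  fixes H :: "('a::{field,finite} ^ 'n) set"
  assumes F: "is_subfield F" and H: "subspace_over F H" and y: "y \<notin> H"
  shows "card (H + span_over F {y}) = card F * card H"
proof -
  have "H \<inter> span_over F {y} \<subseteq> {0}"
  proof
    fix x assume "x \<in> H \<inter> span_over F {y}"
    then obtain c where c: "c \<in> F" "x = c *s y" "x \<in> H"
      using span_over_singleton[OF F, of y] by auto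
    have "c \<noteq> 0 \<Longrightarrow> y \<in> H"
      using subspace_overD(3)[OF H is_subfieldD(6)[OF F c(1)] c(3)] c(2) by (simp add: vector_smult_assoc)
    then show "x \<in> {0}"
      using c y by auto
  qed
  then have "H \<inter> span_over F {y} = {0}"
    using subspace_overD(1)[OF H] subspace_overD(1)[OF subspace_span_over[OF F]] by blast
  moreover have "y \<noteq> 0"
    using y subspace_overD(1)[OF H] by auto
  moreover have "card (H + span_over F {y}) * card (H \<inter> span_over F {y}) = card H * card (span_over F {y})"
    by (rule card_set_plus_mult_card_Int) (auto intro: subspace_over_add_subgroup[OF F] H subspace_span_over[OF F])
  ultimately show ?thesis
    using card_span_over_singleton[OF F \<open>y \<noteq> 0\<close>] by simp
qed

lemma card_scalars_mult_card_le:
  fixes A N :: "('a::{field,finite} ^ 'n) set"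
  assumes F: "is_subfield F" and A: "subspace_over F A" and N: "subspace_over F N"
    and "A \<subseteq> N" "y \<in> N" "y \<notin> A"
  shows "card F * card A \<le> card N"
proof -
  have "A + span_over F {y} \<subseteq> N"
    using assms by (intro set_plus_subset_subspace_over[OF N] span_over_minimal[OF N]) auto
  then have "card (A + span_over F {y}) \<le> card N"
    by (simp add: card_mono)
  then show ?thesis
    using card_set_plus_line[OF F A assms(6)] by simp
qed

lemma card_subspace_over_ge_cube:
  fixes Q N :: "('a::{field,finite} ^ 'n) set"
  assumes F: "is_subfield F" "card F = q" and Q: "subspace_over F Q" "Q \<subseteq> N" "card Q = q"
    and N: "subspace_over F N" "q ^ 2 < card N"
  shows "q ^ 3 \<le> card N"
proof -
  have "q \<le> q ^ 2"
    by (simp add: power2_eq_square le_square)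
  then have "\<not> N \<subseteq> Q"
    using N(2) Q(3) card_mono[of Q N] by auto
  then obtain y1 where y1: "y1 \<in> N" "y1 \<notin> Q"
    by blast
  define A where "A = Q + span_over F {y1}"
  have A: "subspace_over F A"
    unfolding A_def by (rule subspace_over_set_plus[OF Q(1) subspace_span_over[OF F(1)]])
  have card_A: "card A = q ^ 2"
    unfolding A_def using card_set_plus_line[OF F(1) Q(1) y1(2)] F(2) Q(3) by (simp add: power2_eq_square)
  have "A \<subseteq> N"
    unfolding A_def using y1 Q
    by (intro set_plus_subset_subspace_over[OF N(1)] span_over_minimal[OF N(1)]) auto
  moreover have "\<not> N \<subseteq> A"
    using N(2) card_A card_mono[of A N] by auto
  ultimately obtain y2 where "y2 \<in> N" "y2 \<notin> A" "A \<subseteq> N"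
    by blast
  then have "card F * card A \<le> card N"
    by (intro card_scalars_mult_card_le[OF F(1) A N(1)])
  then show ?thesis
    using F(2) card_A by (simp add: power2_eq_square power3_eq_cube mult.assoc)
qed

lemma card_Int_le_card_diff_sq:
  fixes N Q T :: "('a::{field,finite} ^ 'n) set"
  assumes F: "is_subfield F" "card F = q" and Q: "subspace_over F Q" "Q \<subseteq> N" "card Q = q"
    and N: "subspace_over F N" "q ^ 2 < card N" and meet: "q * card (N \<inter> T) \<le> (q - 1) * card N"
  shows "card (N \<inter> T) \<le> card N - q ^ 2"
proof -
  have cube: "q ^ 3 \<le> card N"
    by (rule card_subspace_over_ge_cube[OF F Q N])
  have "q * card (N \<inter> T) \<le> q * card N - card N"
    using meet by (simp add: diff_mult_distrib)
  also have "\<dots> \<le> q * card N - q ^ 3"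
    using cube by (rule diff_le_mono2)
  also have "\<dots> = q * (card N - q ^ 2)"
    by (simp add: diff_mult_distrib2 power2_eq_square power3_eq_cube)
  finally show ?thesis
    using two_le_card_subfield[OF F(1)] F(2) by simp
qed

lemma card_le_mult_card_Int_of_card_eq:
  fixes A H P :: "('a::{field,finite} ^ 'n) set"
  assumes F: "is_subfield F" and A: "subspace_over F A" and P: "subspace_over F P" and H: "subspace_over F H"
    and "A \<subseteq> H" "P \<subseteq> H" "card H = c * card P"
  shows "card A \<le> c * card (A \<inter> P)"
proof -
  have "card A * card P \<le> card (A \<inter> P) * card H"
    by (rule card_mult_card_le_card_Int_mult[OF F A P]) (rule set_plus_subset_subspace_over[OF H assms(5,6)])
  also have "\<dots> = c * card (A \<inter> P) * card P"
    unfolding assms(7) by (simp only: mult.assoc mult.left_commute)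
  finally have "card A * card P \<le> c * card (A \<inter> P) * card P" .
  moreover have "0 \<in> P"
    by (rule subspace_overD(1)[OF P])
  then have "card P > 0"
    by (auto simp: card_gt_0_iff)
  ultimately show ?thesis
    by (simp only: mult_le_cancel2)
qed

lemma card_scalars_mult_card_Int_le:
  fixes N H :: "('a::{field,finite} ^ 'n) set"
  assumes F: "is_subfield F" and N: "subspace_over F N" and H: "subspace_over F H" and "\<not> N \<subseteq> H"
  shows "card F * card (N \<inter> H) \<le> card N"
proof -
  obtain y where y: "y \<in> N" "y \<notin> H"
    using assms(4) by blast
  have "y \<in> N + H" "H \<subseteq> N + H"
    using y subset_set_plus_left[OF subspace_overD(1)[OF H], of N] set_zero_plus2[OF subspace_overD(1)[OF N]]
    by auto
  then have "card F * card H \<le> card (N + H)"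
    using card_scalars_mult_card_le[OF F H subspace_over_set_plus[OF N H]] y(2) by blast
  then have "card F * card H * card (N \<inter> H) \<le> card (N + H) * card (N \<inter> H)"
    by (rule mult_le_mono1)
  also have "\<dots> = card N * card H"
    by (rule card_set_plus_mult_card_Int) (auto intro: subspace_over_add_subgroup[OF F] N H)
  finally have "card F * card (N \<inter> H) * card H \<le> card N * card H"
    by (simp add: ac_simps)
  moreover have "card H > 0"
    using subspace_overD(1)[OF H] by (auto simp: card_gt_0_iff)
  ultimately show ?thesis
    by (simp only: mult_le_cancel2)
qed

lemma card_Int_hyperplanes_Diff_le:
  fixes N H1 H2 P :: "('a::{field,finite} ^ 'n) set"
  assumes F: "is_subfield F" "card F = q"
    and N: "subspace_over F N" and H: "subspace_over F H1" "subspace_over F H2"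
    and P: "subspace_over F P" and P_eq: "H1 \<inter> H2 = P"
    and card_H: "card H1 = q * card P" "card H2 = q * card P"
  shows "q * card (N \<inter> (H1 \<union> H2 - P)) \<le> (q - 1) * card N"
proof -
  have q: "2 \<le> q"
    using two_le_card_subfield[OF F(1)] F(2) by simp
  have diff_le: "q * (a - b) \<le> (q - 1) * a" if "a \<le> q * b" for a b :: nat
  proof -
    have "q * (a - b) = q * a - q * b"
      by (simp add: diff_mult_distrib2)
    also have "\<dots> \<le> q * a - a"
      using that by (rule diff_le_mono2)
    also have "\<dots> = (q - 1) * a"
      by (simp add: diff_mult_distrib)
    finally show ?thesis .
  qed
  show ?thesis
  proof (cases "N \<subseteq> H1 \<or> N \<subseteq> H2")
    case True
    then obtain H where H: "subspace_over F H" "N \<subseteq> H" "P \<subseteq> H" "card H = q * card P"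
      using H card_H P_eq by blast
    have "N \<inter> (H1 \<union> H2 - P) = N - P"
      using True P_eq by blast
    moreover have "card N \<le> q * card (N \<inter> P)"
      by (rule card_le_mult_card_Int_of_card_eq[OF F(1) N P H(1-4)])
    ultimately show ?thesis
      using diff_le[of "card N" "card (N \<inter> P)"] by (simp add: card_Diff_subset_Int)
  next
    case False
    have part: "q * q * card (N \<inter> H - P) \<le> (q - 1) * card N"
      if H: "subspace_over F H" "P \<subseteq> H" "card H = q * card P" "\<not> N \<subseteq> H" for H
    proof -
      have "card (N \<inter> H) \<le> q * card (N \<inter> H \<inter> P)"
        by (rule card_le_mult_card_Int_of_card_eq[OF F(1) subspace_over_Int[OF N H(1)] P H(1)])
          (use H in auto)
      then have "q * card (N \<inter> H - P) \<le> (q - 1) * card (N \<inter> H)"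
        using diff_le by (simp add: card_Diff_subset_Int)
      then have "q * (q * card (N \<inter> H - P)) \<le> q * ((q - 1) * card (N \<inter> H))"
        by (rule mult_le_mono2)
      also have "\<dots> = (q - 1) * (q * card (N \<inter> H))"
        by (simp add: ac_simps)
      also have "\<dots> \<le> (q - 1) * card N"
        using card_scalars_mult_card_Int_le[OF F(1) N H(1) H(4)] F(2) by (intro mult_le_mono2) simp
      finally show ?thesis
        by (simp add: mult.assoc)
    qed
    have "N \<inter> (H1 \<union> H2 - P) = (N \<inter> H1 - P) \<union> (N \<inter> H2 - P)"
      "(N \<inter> H1 - P) \<inter> (N \<inter> H2 - P) = {}"
      using P_eq by blast+
    then have "card (N \<inter> (H1 \<union> H2 - P)) = card (N \<inter> H1 - P) + card (N \<inter> H2 - P)"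
      by (simp add: card_Un_disjoint)
    moreover have "P \<subseteq> H1" "P \<subseteq> H2"
      using P_eq by blast+
    ultimately have "q * q * card (N \<inter> (H1 \<union> H2 - P)) \<le> 2 * ((q - 1) * card N)"
      using part[OF H(1) _ card_H(1)] part[OF H(2) _ card_H(2)] False
      by (simp add: add_mult_distrib2)
    also have "\<dots> \<le> q * ((q - 1) * card N)"
      using q by (intro mult_right_mono) auto
    finally show ?thesis
      using q by (simp add: mult.assoc)
  qed
qed

text \<open>Each nonzero \<open>c *s y\<close> has the \<open>|F| - 1\<close> further representations
  \<open>(c / d) *s (d *s y)\<close>, \<open>d \<in> F - {0}\<close>.\<close>

lemma card_smult_image_le:
  fixes Y :: "('a::{field,finite} ^ 'n) set"
  assumes F: "is_subfield F" and Y: "subspace_over F Y"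
  shows "(card F - 1) * card ({c *s y | c y. y \<in> Y} - {0}) \<le> (CARD('a) - 1) * (card Y - 1)"
proof -
  define A where "A = (UNIV - {0::'a}) \<times> (Y - {0})"
  define f where "f = (\<lambda>(c::'a, y::'a^'n). c *s y)"
  have img: "f ` A = {c *s y | c y. y \<in> Y} - {0}"
  proof
    show "f ` A \<subseteq> {c *s y | c y. y \<in> Y} - {0}"
      unfolding A_def f_def by auto
    show "{c *s y | c y. y \<in> Y} - {0} \<subseteq> f ` A"
    proof
      fix z assume "z \<in> {c *s y | c y. y \<in> Y} - {0}"
      then obtain c y where "y \<in> Y" "z = c *s y" "z \<noteq> 0"
        by blast
      then have "(c, y) \<in> A" "z = f (c, y)"
        unfolding A_def f_def by auto
      then show "z \<in> f ` A"
        by blast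
    qed
  qed
  have fibre: "card F - 1 \<le> card {a \<in> A. f a = z}" if z: "z \<in> f ` A" for z
  proof -
    obtain c0 y0 where c0: "c0 \<noteq> 0" and y0: "y0 \<in> Y" "y0 \<noteq> 0" and z: "z = c0 *s y0"
      using z unfolding A_def f_def by auto
    define g where "g d = (c0 * inverse d, d *s y0)" for d
    have "inj_on g (F - {0})"
      unfolding g_def using y0 by (auto intro!: inj_onI)
    moreover have "g d \<in> {a \<in> A. f a = z}" if d: "d \<in> F - {0}" for d
    proof -
      have "d *s y0 \<in> Y - {0}" "c0 * inverse d \<noteq> 0"
        using subspace_overD(3)[OF Y _ y0(1), of d] d c0 y0(2) by auto
      moreover have "f (c0 * inverse d, d *s y0) = z"
        using d z unfolding f_def by (simp add: vector_smult_assoc)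
      ultimately show ?thesis
        unfolding g_def A_def by simp
    qed
    ultimately have "card (g ` (F - {0})) \<le> card {a \<in> A. f a = z}"
      by (intro card_mono) auto
    then show ?thesis
      using card_image[OF \<open>inj_on g (F - {0})\<close>] is_subfieldD(1)[OF F] by simp
  qed
  have "(card F - 1) * card (f ` A) = (\<Sum>z\<in>f ` A. card F - 1)"
    by simp
  also have "\<dots> \<le> (\<Sum>z\<in>f ` A. card {a \<in> A. f a = z})"
    by (rule sum_mono) (rule fibre)
  also have "\<dots> = card A"
    using sum.group[of A "f ` A" f "\<lambda>_. 1 :: nat"] by simp
  also have "card A = (CARD('a) - 1) * (card Y - 1)"
    unfolding A_def using subspace_overD(1)[OF Y] by (simp add: card_cartesian_product)
  finally show ?thesis
    using img by simp
qed

section \<open>Pencils of subspaces\<close>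

definition pencil :: "('a::field ^ 'n) set \<Rightarrow> ('a ^ 'n) set set" where
  "pencil B = (\<lambda>v. span_over UNIV (insert v B)) ` (- span_over UNIV B)"

lemma pencil_memE:
  assumes "W \<in> pencil B"
  obtains v where "v \<notin> span_over UNIV B" "W = span_over UNIV (insert v B)"
  using assms unfolding pencil_def by blast

lemma span_over_insert_mem_pencil: "v \<notin> span_over UNIV B \<Longrightarrow> span_over UNIV (insert v B) \<in> pencil B"
  unfolding pencil_def by blast

lemma card_span_over_insert:
  fixes B :: "('a::{field,finite} ^ 'n) set"
  assumes "finite B" "indep_over UNIV B" "v \<notin> span_over UNIV B"
  shows "card (span_over UNIV (insert v B)) = CARD('a) ^ Suc (card B)"
proof -
  have "v \<notin> B"
    using assms(3) span_over_superset[of UNIV B] by auto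
  then show ?thesis
    using card_span_over[OF is_subfield_UNIV _ _ indep_over_insert[OF is_subfield_UNIV assms(2,3)]] assms(1)
    by simp
qed

lemma pencil_member_eq:
  fixes B :: "('a::{field,finite} ^ 'n) set"
  assumes "finite B" "indep_over UNIV B" "v \<notin> span_over UNIV B"
    and "w \<in> span_over UNIV (insert v B)" "w \<notin> span_over UNIV B"
  shows "span_over UNIV (insert w B) = span_over UNIV (insert v B)"
proof (rule card_seteq)
  have "insert w B \<subseteq> span_over UNIV (insert v B)"
    using assms(4) span_over_superset[of UNIV "insert v B"] by auto
  then show "span_over UNIV (insert w B) \<subseteq> span_over UNIV (insert v B)"
    by (rule span_over_minimal[OF subspace_span_over[OF is_subfield_UNIV]])
  show "card (span_over UNIV (insert v B)) \<le> card (span_over UNIV (insert w B))"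
    using card_span_over_insert[OF assms(1,2)] assms(3,5) by simp
qed simp

lemma pencil_Diff_disjoint:
  fixes B :: "('a::{field,finite} ^ 'n) set"
  assumes "finite B" "indep_over UNIV B" "W1 \<in> pencil B" "W2 \<in> pencil B" "W1 \<noteq> W2"
  shows "(W1 - span_over UNIV B) \<inter> (W2 - span_over UNIV B) = {}"
proof (rule ccontr)
  assume "\<not> ?thesis"
  then obtain w where w: "w \<in> W1" "w \<in> W2" "w \<notin> span_over UNIV B"
    by blast
  obtain v1 where v1: "v1 \<notin> span_over UNIV B" "W1 = span_over UNIV (insert v1 B)"
    using assms(3) by (rule pencil_memE)
  obtain v2 where v2: "v2 \<notin> span_over UNIV B" "W2 = span_over UNIV (insert v2 B)"
    using assms(4) by (rule pencil_memE)
  have "W1 = span_over UNIV (insert w B)" "W2 = span_over UNIV (insert w B)"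
    using pencil_member_eq[OF assms(1,2) v1(1), of w] pencil_member_eq[OF assms(1,2) v2(1), of w]
      w v1(2) v2(2) by simp_all
  then show False
    using assms(5) by simp
qed

text \<open>The members of a pencil partition the points outside its axis.\<close>

lemma sum_card_pencil_Int_Diff:
  fixes B S :: "('a::{field,finite} ^ 'n) set"
  assumes "finite B" "indep_over UNIV B"
  shows "(\<Sum>W\<in>pencil B. card (W \<inter> S - span_over UNIV B)) = card (S - span_over UNIV B)"
proof -
  have "S - span_over UNIV B \<subseteq> (\<Union>W\<in>pencil B. W \<inter> S - span_over UNIV B)"
  proof
    fix s assume s: "s \<in> S - span_over UNIV B"
    then have "span_over UNIV (insert s B) \<in> pencil B"
      by (intro span_over_insert_mem_pencil) auto
    moreover have "s \<in> span_over UNIV (insert s B)"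
      using span_over_superset[of UNIV "insert s B"] by auto
    ultimately show "s \<in> (\<Union>W\<in>pencil B. W \<inter> S - span_over UNIV B)"
      using s by blast
  qed
  then have "S - span_over UNIV B = (\<Union>W\<in>pencil B. W \<inter> S - span_over UNIV B)"
    by blast
  moreover have "card (\<Union>W\<in>pencil B. W \<inter> S - span_over UNIV B)
      = (\<Sum>W\<in>pencil B. card (W \<inter> S - span_over UNIV B))"
  proof (rule card_UN_disjoint)
    show "\<forall>W1\<in>pencil B. \<forall>W2\<in>pencil B. W1 \<noteq> W2 \<longrightarrow>
        (W1 \<inter> S - span_over UNIV B) \<inter> (W2 \<inter> S - span_over UNIV B) = {}"
      using pencil_Diff_disjoint[OF assms] by blast
  qed auto
  ultimately show ?thesis
    by simp
qed

lemma card_pencil: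
  fixes B :: "('a::{field,finite} ^ 'n) set"
  assumes "finite B" "indep_over UNIV B"
  shows "card (pencil B) * (CARD('a) ^ Suc (card B) - CARD('a) ^ card B)
    = CARD('a ^ 'n) - CARD('a) ^ card B"
proof -
  have card_axis: "card (span_over UNIV B) = CARD('a) ^ card B"
    using card_span_over[OF is_subfield_UNIV _ assms] by simp
  have "card (W \<inter> UNIV - span_over UNIV B) = CARD('a) ^ Suc (card B) - CARD('a) ^ card B"
    if W: "W \<in> pencil B" for W
  proof -
    obtain v where v: "v \<notin> span_over UNIV B" "W = span_over UNIV (insert v B)"
      using W by (rule pencil_memE)
    then have "span_over UNIV B \<subseteq> W"
      using span_over_mono[of B "insert v B" UNIV] by auto
    then show ?thesis
      using card_Diff_subset[of "span_over UNIV B" W] card_span_over_insert[OF assms v(1)] v(2) card_axis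
      by simp
  qed
  then have "card (pencil B) * (CARD('a) ^ Suc (card B) - CARD('a) ^ card B)
      = (\<Sum>W\<in>pencil B. card (W \<inter> UNIV - span_over UNIV B))"
    by simp
  also have "\<dots> = card (UNIV - span_over UNIV B)"
    by (rule sum_card_pencil_Int_Diff[OF assms])
  also have "\<dots> = CARD('a ^ 'n) - CARD('a) ^ card B"
    using card_axis by (simp add: card_Diff_subset)
  finally show ?thesis .
qed

lemma diff_one_mult_diff_one_less:
  fixes q A B :: nat
  assumes "2 \<le> q" "q \<le> A" "1 \<le> B"
  shows "(A - 1) * (B - 1) < (q - 1) * (A * B - 1)"
proof -
  have "1 \<le> A * B"
    using assms by (metis le_trans mult_le_mono one_le_numeral mult_1)
  then have i: "int ((A - 1) * (B - 1)) = (int A - 1) * (int B - 1)"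
    "int ((q - 1) * (A * B - 1)) = (int q - 1) * (int A * int B - 1)"
    using assms by (simp_all add: of_nat_diff)
  have e1: "(int A - 1) * (int B - 1) = int A * int B - int A - int B + 1"
    by (simp add: algebra_simps)
  have e2: "(int q - 1) * (int A * int B - 1) = int q * (int A * int B) - int A * int B - int q + 1"
    by (simp add: algebra_simps)
  have "2 * (int A * int B) \<le> int q * (int A * int B)"
    using assms by (intro mult_right_mono) auto
  then have "(int A - 1) * (int B - 1) < (int q - 1) * (int A * int B - 1)"
    unfolding e1 e2 using assms by linarith
  then show ?thesis
    using i by linarith
qed

lemma pencil_count_inequality:
  fixes q T x c :: int
  assumes q: "2 \<le> q" and T: "q \<le> T" and x: "1 \<le> x" and c: "c * (T - 1) = T * x - 1"
  shows "q ^ 2 * x - q < 2 * (q * x - x) + c * (q ^ 2 - q)"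
proof (rule ccontr)
  assume "\<not> ?thesis"
  then have "(2 * (q * x - x) + c * (q ^ 2 - q)) * (T - 1) \<le> (q ^ 2 * x - q) * (T - 1)"
    using q T by (intro mult_right_mono) auto
  moreover have "c * (q ^ 2 - q) * (T - 1) = (T * x - 1) * (q ^ 2 - q)"
    using c by (metis mult.commute mult.left_commute)
  ultimately have "2 * (q * x - x) * (T - 1) + (T * x - 1) * (q ^ 2 - q) \<le> (q ^ 2 * x - q) * (T - 1)"
    by (simp add: algebra_simps)
  moreover have "(2 * (q * x - x) * (T - 1) + (T * x - 1) * (q ^ 2 - q)) - (q ^ 2 * x - q) * (T - 1)
      = (x * T) * (q - 2) + x * ((q - 1) ^ 2 + 1) + q * (T - q)"
    by (simp add: algebra_simps power2_eq_square)
  moreover have "0 \<le> (x * T) * (q - 2)" "0 < x * ((q - 1) ^ 2 + 1)" "0 \<le> q * (T - q)"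
    using q T x by (simp_all add: add_pos_nonneg)
  ultimately show False
    by linarith
qed

lemma pencil_count_absurd:
  fixes q T x a c N :: nat
  assumes q: "2 \<le> q" and T: "q \<le> T" and x: "1 \<le> x" and a: "0 < a"
    and c: "c * (a * T - a) = a * T * x - a"
    and N: "N = 2 * (q * x - x)" "N + c * (q ^ 2 - q) \<le> q ^ 2 * x - q"
  shows False
proof -
  have "a \<le> a * T" "a \<le> a * T * x"
    using q T x by (simp_all add: mult.assoc)
  then have "int c * (int a * int T - int a) = int a * int T * int x - int a"
    using c by (metis of_nat_diff of_nat_mult)
  then have "int a * (int c * (int T - 1)) = int a * (int T * int x - 1)"
    by (simp add: algebra_simps)
  then have cT: "int c * (int T - 1) = int T * int x - 1"
    using a by simp
  have "x \<le> q * x" "q \<le> q ^ 2" "q \<le> q ^ 2 * x"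
    using q x by (simp_all add: power2_eq_square)
  then have "int N = 2 * (int q * int x - int x)" "int (c * (q ^ 2 - q)) = int c * (int q ^ 2 - int q)"
    "int (q ^ 2 * x - q) = int q ^ 2 * int x - int q"
    using N(1) by (simp_all add: of_nat_diff)
  then have "2 * (int q * int x - int x) + int c * (int q ^ 2 - int q) \<le> int q ^ 2 * int x - int q"
    using N(2) by (metis of_nat_add of_nat_le_iff)
  moreover have "int q ^ 2 * int x - int q < 2 * (int q * int x - int x) + int c * (int q ^ 2 - int q)"
    by (rule pencil_count_inequality) (use q T x cT in auto)
  ultimately show False
    by simp
qed

section \<open>The cone\<close>

text \<open>In vector-space terms \<open>E = (n - k)t\<close>: the vertex \<open>\<Omega>\<close> has dimension \<open>E - 1\<close> over
  \<open>F\<^sub>q\<close>, the cone spans \<open>S = \<langle>\<Gamma>, \<Omega>\<rangle>\<close> of dimension \<open>E + 2\<close>, and \<open>K\<close> is the set of vectors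
  on the cone.\<close>

locale field_reduction_cone =
  fixes q t k E :: nat and Fq :: "'a::{field,finite} set"
    and \<Omega> \<Gamma> :: "('a ^ 'n) set" and Bb :: "('a ^ 'n) set set"
  assumes E_def: "E = CARD('n) * t - k * t"
    and Fq: "is_subfield Fq" and card_Fq: "card Fq = q"
    and t: "0 < t" and k: "0 < k" "k < CARD('n)"
    and card_scalars: "CARD('a) = q ^ t"
    and \<Omega>_vsub: "vsub Fq (CARD('n) * t - k * t - 1) \<Omega>"
    and \<Gamma>_vsub: "vsub Fq 3 \<Gamma>"
    and skew: "\<Gamma> \<inter> \<Omega> = {0}"
    and minB: "minimal_blocking {P \<in> proj_points Fq. P \<subseteq> \<Gamma>} {L. vsub Fq 2 L \<and> L \<subseteq> \<Gamma>} Bb"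
    and tang: "\<forall>P\<in>Bb. card {L. vsub Fq 2 L \<and> L \<subseteq> \<Gamma> \<and> P \<subseteq> L \<and> card {R\<in>Bb. R \<subseteq> L} = 1} \<ge> 2"
begin

definition "S = \<Gamma> + \<Omega>"

definition "K = (\<Union>P\<in>Bb. P + \<Omega>)"

lemma q_ge_2: "2 \<le> q"
  using two_le_card_subfield[OF Fq] card_Fq by simp

lemma t_le_E: "t \<le> E"
proof -
  have "(k + 1) * t \<le> CARD('n) * t"
    using k by (intro mult_right_mono) auto
  then show ?thesis
    by (simp add: algebra_simps E_def)
qed

lemma card_UNIV_vec: "CARD('a ^ 'n) = q ^ (k * t + E)"
proof -
  have "k * t \<le> CARD('n) * t"
    using k by simp
  then have "t * CARD('n) = k * t + E"
    by (simp add: E_def mult.commute)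
  then show ?thesis
    using card_scalars by (simp flip: power_mult)
qed

lemma vsub_Fq: "vsub Fq d (X :: ('a ^ 'n) set) \<Longrightarrow> subspace_over Fq X \<and> card X = q ^ d"
  using vsub_imp_subspace_over[OF Fq finite] card_Fq by auto

lemma vsub_UNIV: "vsub (UNIV :: 'a set) d (X :: ('a ^ 'n) set) \<Longrightarrow> subspace_over UNIV X \<and> card X = q ^ (t * d)"
  using vsub_imp_subspace_over[OF is_subfield_UNIV finite, of d X] card_scalars by (simp add: power_mult)

lemma subspace_\<Omega>: "subspace_over Fq \<Omega>" and card_\<Omega>: "card \<Omega> = q ^ (E - 1)"
  using vsub_Fq[OF \<Omega>_vsub] by (auto simp: E_def)

lemma subspace_\<Gamma>: "subspace_over Fq \<Gamma>" and card_\<Gamma>: "card \<Gamma> = q ^ 3"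
  using vsub_Fq[OF \<Gamma>_vsub] by auto

lemma subspace_S: "subspace_over Fq S"
  unfolding S_def by (rule subspace_over_set_plus[OF subspace_\<Gamma> subspace_\<Omega>])

lemma set_plus_\<Omega>_subset_S: "A \<subseteq> \<Gamma> \<Longrightarrow> A + \<Omega> \<subseteq> S"
  unfolding S_def by (rule set_plus_mono2) auto

lemma \<Gamma>_subset_S: "\<Gamma> \<subseteq> S"
  unfolding S_def by (rule subset_set_plus_left[OF subspace_overD(1)[OF subspace_\<Omega>]])

lemma \<Omega>_subset_S: "\<Omega> \<subseteq> S"
  unfolding S_def by (rule set_zero_plus2[OF subspace_overD(1)[OF subspace_\<Gamma>]])

lemma card_set_plus_\<Omega>:
  assumes "subspace_over Fq A" "A \<subseteq> \<Gamma>"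
  shows "card (A + \<Omega>) = card A * q ^ (E - 1)"
proof -
  have "A \<inter> \<Omega> = {0}"
    using skew assms subspace_overD(1)[OF assms(1)] subspace_overD(1)[OF subspace_\<Omega>] by auto
  moreover have "card (A + \<Omega>) * card (A \<inter> \<Omega>) = card A * card \<Omega>"
    by (rule card_set_plus_mult_card_Int) (auto intro: subspace_over_add_subgroup[OF Fq] assms subspace_\<Omega>)
  ultimately show ?thesis
    using card_\<Omega> by simp
qed

lemma card_S: "card S = q ^ (E + 2)"
proof -
  have "card S = q ^ 3 * q ^ (E - 1)"
    unfolding S_def using card_set_plus_\<Omega>[OF subspace_\<Gamma>] card_\<Gamma> by simp
  also have "\<dots> = q ^ (E + 2)"
    using t_le_E t by (simp flip: power_add)
  finally show ?thesis .
qed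

lemma set_plus_\<Omega>_Int:
  assumes "A \<subseteq> \<Gamma>" "B \<subseteq> \<Gamma>"
  shows "(A + \<Omega>) \<inter> (B + \<Omega>) = (A \<inter> B) + \<Omega>"
proof
  show "(A + \<Omega>) \<inter> (B + \<Omega>) \<subseteq> (A \<inter> B) + \<Omega>"
  proof
    fix h assume h: "h \<in> (A + \<Omega>) \<inter> (B + \<Omega>)"
    obtain a w1 where a: "a \<in> A" "w1 \<in> \<Omega>" "h = a + w1"
      using h unfolding set_plus_def by blast
    obtain b w2 where b: "b \<in> B" "w2 \<in> \<Omega>" "h = b + w2"
      using h unfolding set_plus_def by blast
    have "a - b \<in> \<Gamma>"
      using subspace_over_diff[OF Fq subspace_\<Gamma>, of a b] a(1) b(1) assms by blast
    moreover have "a - b = w2 - w1"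
      using a(3) b(3) by (simp add: algebra_simps)
    moreover have "w2 - w1 \<in> \<Omega>"
      by (rule subspace_over_diff[OF Fq subspace_\<Omega> b(2) a(2)])
    ultimately have "a - b \<in> \<Gamma> \<inter> \<Omega>"
      by simp
    then have "a \<in> A \<inter> B"
      using skew a(1) b(1) by simp
    then show "h \<in> (A \<inter> B) + \<Omega>"
      using a(2,3) by (simp add: set_plus_intro)
  qed
  show "(A \<inter> B) + \<Omega> \<subseteq> (A + \<Omega>) \<inter> (B + \<Omega>)"
    using set_plus_mono2[of "A \<inter> B" A \<Omega> \<Omega>] set_plus_mono2[of "A \<inter> B" B \<Omega> \<Omega>] by blast
qed

lemma Bb_point: "P \<in> Bb \<Longrightarrow> vsub Fq 1 P \<and> P \<subseteq> \<Gamma>"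
  using minB unfolding minimal_blocking_def blocking_def proj_points_def by blast

lemma Bb_blocks: "vsub Fq 2 L \<Longrightarrow> L \<subseteq> \<Gamma> \<Longrightarrow> \<exists>P\<in>Bb. P \<subseteq> L"
  using minB unfolding minimal_blocking_def blocking_def by blast

lemma subspace_Bb: "P \<in> Bb \<Longrightarrow> subspace_over Fq P"
  using Bb_point vsub_Fq by blast

lemma card_Bb: "P \<in> Bb \<Longrightarrow> card P = q"
  using Bb_point vsub_Fq by fastforce

lemma card_Bb_plus_\<Omega>:
  assumes "P \<in> Bb"
  shows "card (P + \<Omega>) = q ^ E"
proof -
  have "card (P + \<Omega>) = q * q ^ (E - 1)"
    using card_set_plus_\<Omega>[OF subspace_Bb[OF assms]] Bb_point[OF assms] card_Bb[OF assms] by simp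
  moreover have "Suc (E - 1) = E"
    using t_le_E t by simp
  ultimately show ?thesis
    by (metis power_Suc)
qed

lemma K_subset_S: "K \<subseteq> S"
  unfolding K_def using set_plus_\<Omega>_subset_S Bb_point by blast

lemma card_Int_S_ge:
  assumes "subspace_over Fq W" "card W = q ^ (t * k)"
  shows "q ^ 2 \<le> card (W \<inter> S)"
proof -
  have "card W * card S \<le> card (W \<inter> S) * CARD('a ^ 'n)"
    by (rule card_mult_card_le_card_Int_mult[OF Fq assms(1) subspace_S]) simp
  moreover have "card W * card S = q ^ 2 * q ^ (k * t + E)"
  proof -
    have "card W * card S = q ^ (t * k + (E + 2))"
      using assms(2) card_S by (simp add: power_add)
    also have "t * k + (E + 2) = 2 + (k * t + E)"
      by simp
    finally show ?thesis
      by (simp only: power_add)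
  qed
  ultimately have "q ^ 2 * q ^ (k * t + E) \<le> card (W \<inter> S) * q ^ (k * t + E)"
    by (simp only: card_UNIV_vec)
  moreover have "0 < q ^ (k * t + E)"
    using q_ge_2 by simp
  ultimately show ?thesis
    by (simp only: mult_le_cancel2)
qed

lemma exists_Bb_subset:
  assumes G: "subspace_over Fq G" "G \<subseteq> \<Gamma>" "q ^ 2 \<le> card G"
  shows "\<exists>P\<in>Bb. P \<subseteq> G"
proof -
  have q_less: "q < q ^ 2"
    using power_strict_increasing[of 1 2 q] q_ge_2 by simp
  have "\<not> G \<subseteq> {0}"
  proof
    assume "G \<subseteq> {0}"
    then have "card G \<le> 1"
      using card_mono[of "{0}" G] by simp
    then show False
      using G(3) q_less q_ge_2 by simp
  qed
  then obtain a where a: "a \<in> G" "a \<noteq> 0"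
    by blast
  have "card (span_over Fq {a}) = q"
    using card_span_over_singleton[OF Fq a(2)] card_Fq by simp
  then have "\<not> G \<subseteq> span_over Fq {a}"
    using G(3) q_less card_mono[of "span_over Fq {a}" G] by auto
  then obtain b where b: "b \<in> G" "b \<notin> span_over Fq {a}"
    by blast
  have "b \<noteq> a"
    using b span_over_superset[OF is_subfieldD(2)[OF Fq], of "{a}"] by auto
  moreover have "indep_over Fq (insert b {a})"
    using indep_over_insert[OF Fq _ b(2)] indep_over_singleton[OF is_subfieldD(2)[OF Fq]] a(2) by blast
  ultimately have "vsub Fq 2 (span_over Fq {b, a})"
    by (intro vsub_span_over) auto
  moreover have "span_over Fq {b, a} \<subseteq> G"
    using span_over_minimal[OF G(1)] a b by simp
  ultimately show ?thesis
    using Bb_blocks G(2) by (meson order.trans)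
qed

text \<open>A subspace meeting \<open>S\<close> in at least a line meets the vertex, or projects from
  \<open>\<Omega>\<close> onto a line of \<open>\<Gamma>\<close>, which contains a point of \<open>\<B>\<close>.\<close>

lemma exists_cone_vector:
  assumes W: "subspace_over Fq W" and card_W: "q ^ 2 \<le> card (W \<inter> S)"
  shows "\<exists>u. u \<noteq> 0 \<and> u \<in> W \<inter> K"
proof (cases "\<exists>w\<in>W \<inter> \<Omega>. w \<noteq> 0")
  case True
  then obtain w where w: "w \<in> W" "w \<in> \<Omega>" "w \<noteq> 0"
    by blast
  have "q ^ 2 \<le> card \<Gamma>"
    using card_\<Gamma> q_ge_2 power_increasing[of 2 3 q] by simp
  then obtain P where P: "P \<in> Bb"
    using exists_Bb_subset[OF subspace_\<Gamma> order_refl] by blast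
  have "w \<in> P + \<Omega>"
    using set_zero_plus2[OF subspace_overD(1)[OF subspace_Bb[OF P]]] w(2) by blast
  then show ?thesis
    using w P unfolding K_def by blast
next
  case False
  define U where "U = W \<inter> S"
  have U: "subspace_over Fq U"
    unfolding U_def by (rule subspace_over_Int[OF W subspace_S])
  have "U \<inter> \<Omega> = {0}"
    unfolding U_def using False subspace_overD(1)[OF W] subspace_overD(1)[OF subspace_S]
      subspace_overD(1)[OF subspace_\<Omega>] by auto
  moreover have "card (U + \<Omega>) * card (U \<inter> \<Omega>) = card U * card \<Omega>"
    by (rule card_set_plus_mult_card_Int) (auto intro: subspace_over_add_subgroup[OF Fq] U subspace_\<Omega>)
  ultimately have card_U\<Omega>: "card (U + \<Omega>) = card U * q ^ (E - 1)"
    using card_\<Omega> by simp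
  define G where "G = (U + \<Omega>) \<inter> \<Gamma>"
  have U\<Omega>: "subspace_over Fq (U + \<Omega>)"
    by (rule subspace_over_set_plus[OF U subspace_\<Omega>])
  have G: "subspace_over Fq G" "G \<subseteq> \<Gamma>"
    unfolding G_def using subspace_over_Int[OF U\<Omega> subspace_\<Gamma>] by auto
  have "U + \<Omega> \<subseteq> S"
    unfolding U_def by (intro set_plus_subset_subspace_over[OF subspace_S _ \<Omega>_subset_S]) auto
  then have "U + \<Omega> + \<Gamma> \<subseteq> S"
    by (rule set_plus_subset_subspace_over[OF subspace_S _ \<Gamma>_subset_S])
  then have "card (U + \<Omega>) * card \<Gamma> \<le> card G * card S"
    unfolding G_def by (rule card_mult_card_le_card_Int_mult[OF Fq U\<Omega> subspace_\<Gamma>])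
  moreover have "q ^ (E - 1) * q ^ 3 = q ^ (E + 2)"
    using t_le_E t by (simp flip: power_add)
  ultimately have "card U * q ^ (E + 2) \<le> card G * q ^ (E + 2)"
    by (simp only: card_U\<Omega> card_\<Gamma> card_S mult.assoc)
  moreover have "0 < q ^ (E + 2)"
    using q_ge_2 by simp
  ultimately have "card U \<le> card G"
    by (simp only: mult_le_cancel2)
  then have "q ^ 2 \<le> card G"
    using card_W unfolding U_def by simp
  then obtain P where P: "P \<in> Bb" "P \<subseteq> G"
    using exists_Bb_subset[OF G] by blast
  obtain p where p: "p \<noteq> 0" "P = span_over Fq {p}"
    using vsub_1_E[OF Fq] Bb_point[OF P(1)] by blast
  have "p \<in> P"
    using p(2) span_over_superset[OF is_subfieldD(2)[OF Fq], of "{p}"] by auto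
  then have "p \<in> U + \<Omega>" "p \<in> \<Gamma>"
    using P(2) unfolding G_def by auto
  then obtain u \<omega> where u: "p = u + \<omega>" "u \<in> U" "\<omega> \<in> \<Omega>"
    unfolding set_plus_def by blast
  have "u \<noteq> 0"
  proof
    assume "u = 0"
    then have "p \<in> \<Gamma> \<inter> \<Omega>"
      using u(1,3) \<open>p \<in> \<Gamma>\<close> by simp
    then show False
      using skew p(1) by simp
  qed
  moreover have "u = p + - \<omega>"
    using u(1) by (simp add: algebra_simps)
  then have "u \<in> P + \<Omega>"
    using set_plus_intro[OF \<open>p \<in> P\<close> subspace_over_neg[OF Fq subspace_\<Omega> u(3)]] by simp
  ultimately show ?thesis
    using u(2) P(1) unfolding U_def K_def by blast
qed

lemma exists_spread_B_cone_subset: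
  assumes u: "u \<noteq> 0" "u \<in> W \<inter> K" and W: "subspace_over UNIV W"
  shows "\<exists>X\<in>spread_B (cone Fq \<Omega> Bb). X \<subseteq> W"
proof -
  obtain P where P: "P \<in> Bb" "u \<in> P + \<Omega>"
    using u(2) unfolding K_def by blast
  have "span_over Fq {u} \<subseteq> span_over Fq (P \<union> \<Omega>)"
    using span_over_Un[OF Fq subspace_Bb[OF P(1)] subspace_\<Omega>] P(2)
      span_over_minimal[OF subspace_over_set_plus[OF subspace_Bb[OF P(1)] subspace_\<Omega>]] by simp
  then have "span_over Fq {u} \<in> cone Fq \<Omega> Bb"
    unfolding cone_def proj_points_def using vsub_1_span_over_singleton[OF Fq u(1)] P(1) by blast
  moreover have "span_over Fq {u} \<subseteq> span_over UNIV {u}"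
    by (rule span_over_mono_scalars) simp
  moreover have "span_over UNIV {u} \<in> proj_points UNIV"
    unfolding proj_points_def using vsub_1_span_over_singleton[OF is_subfield_UNIV u(1)] by simp
  ultimately have "span_over UNIV {u} \<in> spread_B (cone Fq \<Omega> Bb)"
    unfolding spread_B_def by blast
  moreover have "span_over UNIV {u} \<subseteq> W"
    using span_over_minimal[OF W] u(2) by simp
  ultimately show ?thesis
    by blast
qed

lemma spread_B_coneE:
  assumes "X \<in> spread_B (cone Fq \<Omega> Bb)"
  obtains P u where "P \<in> Bb" "u \<noteq> 0" "span_over Fq {u} \<subseteq> P + \<Omega>" "span_over Fq {u} \<subseteq> X"
    "X = span_over UNIV {u}"
proof -
  obtain Q where X: "X \<in> proj_points UNIV" "Q \<in> cone Fq \<Omega> Bb" "Q \<subseteq> X"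
    using assms unfolding spread_B_def by blast
  obtain P where P: "P \<in> Bb" "Q \<in> proj_points Fq" "Q \<subseteq> span_over Fq (P \<union> \<Omega>)"
    using X(2) unfolding cone_def by blast
  obtain u where u: "u \<noteq> 0" "Q = span_over Fq {u}"
    using vsub_1_E[OF Fq] P(2) unfolding proj_points_def by blast
  obtain x where x: "x \<noteq> 0" "X = span_over UNIV {x}"
    using vsub_1_E[OF is_subfield_UNIV] X(1) unfolding proj_points_def by blast
  have "u \<in> X"
    using u(2) X(3) span_over_superset[OF is_subfieldD(2)[OF Fq], of "{u}"] by auto
  then have "X = span_over UNIV {u}"
    using span_over_singleton_eq[OF is_subfield_UNIV _ u(1)] x(2) by simp
  moreover have "Q \<subseteq> P + \<Omega>"
    using P span_over_Un[OF Fq subspace_Bb[OF P(1)] subspace_\<Omega>] by simp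
  ultimately show ?thesis
    using that P(1) u X(3) by blast
qed

lemma blocking_spread_B_cone: "blocking (proj_points UNIV) {W. vsub UNIV k W} (spread_B (cone Fq \<Omega> Bb))"
  unfolding blocking_def
proof (intro conjI ballI)
  show "spread_B (cone Fq \<Omega> Bb) \<subseteq> proj_points UNIV"
    unfolding spread_B_def by blast
next
  fix W :: "('a ^ 'n) set" assume "W \<in> {W. vsub UNIV k W}"
  then have WU: "subspace_over UNIV W" and card_W: "card W = q ^ (t * k)"
    using vsub_UNIV[of k W] by auto
  have "q ^ 2 \<le> card (W \<inter> S)"
    by (rule card_Int_S_ge[OF subspace_over_UNIV_imp[OF WU] card_W])
  then obtain u where "u \<noteq> 0" "u \<in> W \<inter> K"
    using exists_cone_vector[OF subspace_over_UNIV_imp[OF WU]] by blast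
  then show "\<exists>X\<in>spread_B (cone Fq \<Omega> Bb). X \<subseteq> W"
    by (rule exists_spread_B_cone_subset[OF _ _ WU])
qed

subsection \<open>Minimality\<close>

lemma card_smult_image_less:
  assumes Y: "subspace_over Fq Y" and m: "t \<le> m" and card_Y: "card Y \<le> q ^ (m - t)"
  shows "card {c *s y | c y. y \<in> Y} < q ^ m"
proof (rule ccontr)
  define M where "M = {c *s y | c y. y \<in> Y}"
  assume "\<not> card {c *s y | c y. y \<in> Y} < q ^ m"
  then have M_ge: "q ^ m \<le> card M"
    unfolding M_def by simp
  define A where "A = q ^ t"
  define C where "C = q ^ (m - t)"
  have AC: "A * C = q ^ m"
    unfolding A_def C_def using m by (simp flip: power_add)
  have "q \<le> A"
    unfolding A_def using t q_ge_2 by (simp add: self_le_power)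
  moreover have "1 \<le> C"
    unfolding C_def using q_ge_2 by simp
  ultimately have "(A - 1) * (C - 1) < (q - 1) * (A * C - 1)"
    by (rule diff_one_mult_diff_one_less[OF q_ge_2])
  also have "\<dots> \<le> (q - 1) * card (M - {0})"
  proof (rule mult_left_mono)
    have "1 *s 0 \<in> M"
      unfolding M_def using subspace_overD(1)[OF Y] by blast
    then have "card (M - {0}) = card M - 1"
      by (simp add: card_Diff_singleton)
    then show "A * C - 1 \<le> card (M - {0})"
      using M_ge AC by simp
  qed simp
  also have "\<dots> \<le> (q ^ t - 1) * (card Y - 1)"
    using card_smult_image_le[OF Fq Y] card_Fq card_scalars unfolding M_def by simp
  also have "\<dots> \<le> (A - 1) * (C - 1)"
    unfolding A_def C_def using card_Y by (intro mult_left_mono diff_le_mono) auto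
  finally show False
    by simp
qed

text \<open>The \<open>F\<^sub>q\<^sub>t\<close>-multiples of \<open>S + Z\<close> do not cover the space, and a vector outside them
  spans with \<open>Z\<close> a subspace meeting \<open>S\<close> only in \<open>Z \<inter> S\<close>.\<close>

lemma exists_extension_Int_S_eq:
  assumes B: "finite B" "indep_over UNIV B"
    and bound: "card (S + span_over UNIV B) \<le> q ^ (k * t + E - t)"
  shows "\<exists>v. v \<notin> span_over UNIV B \<and> span_over UNIV (insert v B) \<inter> S = span_over UNIV B \<inter> S"
proof -
  define Z where "Z = span_over UNIV B"
  have ZU: "subspace_over UNIV Z"
    unfolding Z_def by (rule subspace_span_over[OF is_subfield_UNIV])
  define Y where "Y = S + Z"
  have Y: "subspace_over Fq Y"
    unfolding Y_def by (rule subspace_over_set_plus[OF subspace_S subspace_over_UNIV_imp[OF ZU]])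
  define M where "M = {c *s y | c y. y \<in> Y}"
  have "card M < q ^ (k * t + E)"
    unfolding M_def using bound t_le_E
    by (intro card_smult_image_less[OF Y]) (simp_all add: Y_def Z_def trans_le_add2)
  have "\<not> UNIV \<subseteq> M"
  proof
    assume "UNIV \<subseteq> M"
    then have "CARD('a ^ 'n) \<le> card M"
      by (rule card_mono[OF finite])
    then show False
      using \<open>card M < q ^ (k * t + E)\<close> card_UNIV_vec by simp
  qed
  then obtain v where v: "v \<notin> M"
    by blast
  have "span_over UNIV (insert v B) \<inter> S \<subseteq> Z"
  proof
    fix s assume "s \<in> span_over UNIV (insert v B) \<inter> S"
    then obtain z c where zc: "z \<in> Z" "s = z + c *s v" "s \<in> S"
      using span_over_insert[OF is_subfield_UNIV, of v B] unfolding Z_def by auto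
    have "c = 0"
    proof (rule ccontr)
      assume "c \<noteq> 0"
      have "s + - z \<in> Y"
        unfolding Y_def by (rule set_plus_intro[OF zc(3) subspace_over_neg[OF is_subfield_UNIV ZU zc(1)]])
      then have "inverse c *s (s + - z) \<in> M"
        unfolding M_def by blast
      moreover have "inverse c *s (s + - z) = v"
        using zc(2) \<open>c \<noteq> 0\<close> by (simp add: vector_add_ldistrib vector_smult_assoc vector_smult_rneg)
      ultimately show False
        using v by simp
    qed
    then show "s \<in> Z"
      using zc by simp
  qed
  moreover have "Z \<subseteq> M"
  proof
    fix z assume "z \<in> Z"
    then have "1 *s z \<in> M"
      unfolding M_def Y_def using set_zero_plus2[OF subspace_overD(1)[OF subspace_S]] by blast
    then show "z \<in> M"
      by simp
  qed
  then have "v \<notin> Z"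
    using v by auto
  ultimately show ?thesis
    using span_over_mono[of B "insert v B" UNIV] unfolding Z_def by blast
qed

text \<open>Starting from \<open>\<langle>x\<rangle>\<close>, extend a basis one vector at a time without enlarging its
  intersection with \<open>S\<close>; the bound keeps \<open>|S + Z|\<close> small enough at every stage.\<close>

lemma exists_basis_extension_Int_S_eq:
  assumes x: "x \<noteq> 0" and J: "1 \<le> J"
    and bound: "\<And>j. j < J \<Longrightarrow> q ^ (E + 2) * q ^ (t * j) \<le> q ^ (k * t + E - t) * card (span_over UNIV {x} \<inter> S)"
  shows "\<exists>B. finite B \<and> indep_over UNIV B \<and> card B = J \<and> x \<in> span_over UNIV B
           \<and> span_over UNIV B \<inter> S = span_over UNIV {x} \<inter> S"
  using J bound
proof (induction J rule: nat_induct_at_least)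
  case base
  show ?case
    using indep_over_singleton[of UNIV x] x span_over_superset[of UNIV "{x}"] by (intro exI[of _ "{x}"]) auto
next
  case (Suc j)
  then obtain B where B: "finite B" "indep_over UNIV B" "card B = j" "x \<in> span_over UNIV B"
      "span_over UNIV B \<inter> S = span_over UNIV {x} \<inter> S"
    by auto
  define Z where "Z = span_over UNIV B"
  have ZU: "subspace_over UNIV Z"
    unfolding Z_def by (rule subspace_span_over[OF is_subfield_UNIV])
  have card_Z: "card Z = q ^ (t * j)"
    using card_span_over[OF is_subfield_UNIV _ B(1,2)] card_scalars B(3) unfolding Z_def by (simp add: power_mult)
  have "card (S + Z) * card (S \<inter> Z) = card S * card Z"
    by (rule card_set_plus_mult_card_Int)
      (auto intro: subspace_over_add_subgroup[OF Fq] subspace_S subspace_over_UNIV_imp[OF ZU])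
  then have "card (S + Z) * card (Z \<inter> S) = q ^ (E + 2) * q ^ (t * j)"
    by (simp only: card_S card_Z Int_commute)
  also have "\<dots> \<le> q ^ (k * t + E - t) * card (Z \<inter> S)"
    using Suc.prems[of j] B(5) unfolding Z_def by simp
  finally have "card (S + Z) * card (Z \<inter> S) \<le> q ^ (k * t + E - t) * card (Z \<inter> S)" .
  moreover have "0 \<in> Z \<inter> S"
    using subspace_overD(1)[OF ZU] subspace_overD(1)[OF subspace_S] by blast
  then have "0 < card (Z \<inter> S)"
    by (auto simp: card_gt_0_iff)
  ultimately have "card (S + Z) \<le> q ^ (k * t + E - t)"
    by (simp only: mult_le_cancel2)
  then obtain v where v: "v \<notin> Z" "span_over UNIV (insert v B) \<inter> S = Z \<inter> S"
    using exists_extension_Int_S_eq[OF B(1,2)] unfolding Z_def by blast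
  moreover have "v \<notin> B"
    using v(1) span_over_superset[of UNIV B] unfolding Z_def by auto
  ultimately show ?case
    using B indep_over_insert[OF is_subfield_UNIV B(2)] span_over_mono[of B "insert v B" UNIV]
    unfolding Z_def by (intro exI[of _ "insert v B"]) auto
qed

lemma tangent_lines:
  assumes P: "P \<in> Bb"
  obtains l1 l2 where "l1 \<noteq> l2" "vsub Fq 2 l1" "l1 \<subseteq> \<Gamma>" "P \<subseteq> l1" "{R\<in>Bb. R \<subseteq> l1} = {P}"
     "vsub Fq 2 l2" "l2 \<subseteq> \<Gamma>" "P \<subseteq> l2" "{R\<in>Bb. R \<subseteq> l2} = {P}"
proof -
  define T where "T = {L. vsub Fq 2 L \<and> L \<subseteq> \<Gamma> \<and> P \<subseteq> L \<and> card {R\<in>Bb. R \<subseteq> L} = 1}"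
  have card_T: "2 \<le> card T"
    using tang P unfolding T_def by blast
  then have "0 < card T"
    by simp
  then have "finite T" "T \<noteq> {}"
    by (simp_all add: card_gt_0_iff)
  then obtain l1 where l1: "l1 \<in> T"
    by blast
  have "card (T - {l1}) = card T - 1"
    using l1 \<open>finite T\<close> by (simp add: card_Diff_singleton)
  then have "card (T - {l1}) \<noteq> 0"
    using card_T by simp
  then have "T - {l1} \<noteq> {}"
    by (metis card.empty)
  then obtain l2 where l2: "l2 \<in> T" "l1 \<noteq> l2"
    by blast
  have tangent: "{R\<in>Bb. R \<subseteq> L} = {P}" if L: "L \<in> T" for L
  proof -
    have "card {R\<in>Bb. R \<subseteq> L} = 1"
      using L unfolding T_def by blast
    then obtain R where R: "{R\<in>Bb. R \<subseteq> L} = {R}"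
      by (rule card_1_singletonE)
    moreover have "P \<in> {R\<in>Bb. R \<subseteq> L}"
      using L P unfolding T_def by simp
    ultimately have "R = P"
      by simp
    then show ?thesis
      using R by simp
  qed
  have L: "vsub Fq 2 l1" "l1 \<subseteq> \<Gamma>" "P \<subseteq> l1" "vsub Fq 2 l2" "l2 \<subseteq> \<Gamma>" "P \<subseteq> l2"
    using l1 l2(1) unfolding T_def by simp_all
  show ?thesis
    by (rule that[OF l2(2) L(1-3) tangent[OF l1] L(4-6) tangent[OF l2(1)]])
qed

lemma K_Int_tangent_subset:
  assumes P: "P \<in> Bb" and l: "l \<subseteq> \<Gamma>" "subspace_over Fq l" "{R\<in>Bb. R \<subseteq> l} = {P}"
  shows "K \<inter> (l + \<Omega>) \<subseteq> P + \<Omega>"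
proof -
  have "(P' + \<Omega>) \<inter> (l + \<Omega>) \<subseteq> P + \<Omega>" if P': "P' \<in> Bb" for P'
  proof -
    obtain p where "P' = span_over Fq {p}"
      using vsub_1_E[OF Fq] Bb_point[OF P'] by blast
    then have "P' \<subseteq> l \<or> P' \<inter> l \<subseteq> {0}"
      using span_over_singleton_subset_or_Int_eq[OF Fq l(2)] by simp
    moreover have "P' = P" if "P' \<subseteq> l"
    proof -
      have "P' \<in> {R\<in>Bb. R \<subseteq> l}"
        using P' that by simp
      then show ?thesis
        using l(3) by simp
    qed
    ultimately have "P' \<inter> l \<subseteq> P"
      using subspace_overD(1)[OF subspace_Bb[OF P]] by blast
    then have "(P' \<inter> l) + \<Omega> \<subseteq> P + \<Omega>"
      by (rule set_plus_mono2) simp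
    then show ?thesis
      using set_plus_\<Omega>_Int[of P' l] Bb_point[OF P'] l(1) by simp
  qed
  then show ?thesis
    unfolding K_def by blast
qed

text \<open>Through a point \<open>P\<close> of \<open>\<B>\<close> pass two tangent lines \<open>l\<^sub>1, l\<^sub>2\<close>; the hyperplanes
  \<open>\<langle>l\<^sub>i, \<Omega>\<rangle>\<close> of \<open>S\<close> meet the cone only in \<open>\<langle>P, \<Omega>\<rangle>\<close>.\<close>

lemma tangent_hyperplanes:
  assumes P: "P \<in> Bb"
  obtains H1 H2 where "subspace_over Fq H1" "subspace_over Fq H2" "H1 \<inter> H2 = P + \<Omega>"
    "card H1 = q * card (P + \<Omega>)" "card H2 = q * card (P + \<Omega>)" "H1 \<subseteq> S" "H2 \<subseteq> S"
    "K \<inter> H1 \<subseteq> P + \<Omega>" "K \<inter> H2 \<subseteq> P + \<Omega>"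
proof -
  obtain l1 l2 where l: "l1 \<noteq> l2" "vsub Fq 2 l1" "l1 \<subseteq> \<Gamma>" "P \<subseteq> l1" "{R\<in>Bb. R \<subseteq> l1} = {P}"
     "vsub Fq 2 l2" "l2 \<subseteq> \<Gamma>" "P \<subseteq> l2" "{R\<in>Bb. R \<subseteq> l2} = {P}"
    using tangent_lines[OF P] by blast
  have l1: "subspace_over Fq l1" "card l1 = q * card P" and l2: "subspace_over Fq l2" "card l2 = q * card P"
    using vsub_Fq[OF l(2)] vsub_Fq[OF l(6)] card_Bb[OF P] by (auto simp: power2_eq_square)
  have "l1 \<inter> l2 = P"
  proof (rule ccontr)
    assume "l1 \<inter> l2 \<noteq> P"
    then obtain y where "y \<in> l1 \<inter> l2" "y \<notin> P"
      using l(4,8) by blast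
    then have "card Fq * card P \<le> card (l1 \<inter> l2)"
      using l(4,8) by (intro card_scalars_mult_card_le[OF Fq subspace_Bb[OF P] subspace_over_Int[OF l1(1) l2(1)]])
        auto
    then have "card l1 \<le> card (l1 \<inter> l2)" "card l2 \<le> card (l1 \<inter> l2)"
      using l1(2) l2(2) card_Fq by simp_all
    then have "l1 \<inter> l2 = l1" "l1 \<inter> l2 = l2"
      using card_seteq[OF finite, of "l1 \<inter> l2" l1] card_seteq[OF finite, of "l1 \<inter> l2" l2] by blast+
    then show False
      using l(1) by simp
  qed
  then have "(l1 + \<Omega>) \<inter> (l2 + \<Omega>) = P + \<Omega>"
    using set_plus_\<Omega>_Int[OF l(3,7)] by simp
  moreover have "card (l1 + \<Omega>) = q * card (P + \<Omega>)" "card (l2 + \<Omega>) = q * card (P + \<Omega>)"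
    using card_set_plus_\<Omega>[OF l1(1) l(3)] card_set_plus_\<Omega>[OF l2(1) l(7)] l1(2) l2(2)
      card_set_plus_\<Omega>[OF subspace_Bb[OF P]] Bb_point[OF P] by (simp_all add: mult.assoc)
  ultimately show ?thesis
    using that[of "l1 + \<Omega>" "l2 + \<Omega>"] subspace_over_set_plus[OF l1(1) subspace_\<Omega>]
      subspace_over_set_plus[OF l2(1) subspace_\<Omega>] set_plus_\<Omega>_subset_S l(3,7)
      K_Int_tangent_subset[OF P l(3) l1(1) l(5)] K_Int_tangent_subset[OF P l(7) l2(1) l(9)]
    by blast
qed

lemma card_pencil_Int_S_ge:
  assumes B: "finite B" "indep_over UNIV B" "card B = k - 1" and W: "W \<in> pencil B"
  shows "q ^ 2 \<le> card (W \<inter> S)"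
proof -
  obtain v where v: "v \<notin> span_over UNIV B" "W = span_over UNIV (insert v B)"
    using W by (rule pencil_memE)
  have "Suc (card B) = k"
    using B(3) k(1) by simp
  then have "card W = q ^ (t * k)"
    using card_span_over_insert[OF B(1,2) v(1)] v(2) card_scalars by (simp add: power_mult)
  moreover have "subspace_over Fq W"
    unfolding v(2) by (rule subspace_over_UNIV_imp[OF subspace_span_over[OF is_subfield_UNIV]])
  ultimately show ?thesis
    using card_Int_S_ge by blast
qed

lemma sum_card_pencil_Int_S:
  assumes B: "finite B" "indep_over UNIV B" and Q: "span_over UNIV B \<inter> S = Q" "card Q = q"
  shows "(\<Sum>W\<in>pencil B. card (W \<inter> S) - q) = q ^ (E + 2) - q"
proof -
  have "card (W \<inter> S) - q = card (W \<inter> S - span_over UNIV B)" if W: "W \<in> pencil B" for W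
  proof -
    obtain v where "W = span_over UNIV (insert v B)"
      using W by (rule pencil_memE)
    then have "span_over UNIV B \<subseteq> W"
      using span_over_mono[of B "insert v B" UNIV] by auto
    then have "W \<inter> S \<inter> span_over UNIV B = Q"
      using Q(1) by blast
    then show ?thesis
      using card_Diff_subset_Int[of "W \<inter> S" "span_over UNIV B"] Q(2) by simp
  qed
  then have "(\<Sum>W\<in>pencil B. card (W \<inter> S) - q) = (\<Sum>W\<in>pencil B. card (W \<inter> S - span_over UNIV B))"
    by (rule sum.cong[OF refl])
  also have "\<dots> = card (S - span_over UNIV B)"
    by (rule sum_card_pencil_Int_Diff[OF B])
  also have "\<dots> = q ^ (E + 2) - q"
    using card_Diff_subset_Int[of S "span_over UNIV B"] Q card_S by (simp add: Int_commute)
  finally show ?thesis .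
qed

lemma card_pencil_eq:
  fixes B :: "('a ^ 'n) set"
  assumes B: "finite B" "indep_over UNIV B" "card B = k - 1"
  shows "card (pencil B) * (q ^ (t * (k - 1)) * q ^ t - q ^ (t * (k - 1)))
    = q ^ (t * (k - 1)) * q ^ t * q ^ E - q ^ (t * (k - 1))"
proof -
  define a where "a = q ^ (t * (k - 1))"
  have card_axis: "CARD('a) ^ card B = a"
    unfolding a_def card_scalars B(3) by (simp only: power_mult)
  have "CARD('a) ^ Suc (card B) = CARD('a) * CARD('a) ^ card B"
    by (rule power_Suc)
  also have "\<dots> = a * q ^ t"
    unfolding card_axis unfolding card_scalars by (rule mult.commute)
  finally have card_member: "CARD('a) ^ Suc (card B) = a * q ^ t" .
  have "k * t + E = t * (k - 1) + t + E"
    using k(1) by (cases k) (simp_all add: algebra_simps)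
  then have "CARD('a ^ 'n) = a * q ^ t * q ^ E"
    unfolding card_UNIV_vec a_def by (simp only: power_add)
  then show ?thesis
    using card_pencil[OF B(1,2)] unfolding card_member card_axis a_def[symmetric] by simp
qed

text \<open>If no member of the pencil through a point of \<open>T\<close> meets \<open>S\<close> in just a line, each such
  member meets \<open>S\<close> in at least a plane and contains relatively few points of \<open>T\<close>; summing over
  the pencil bounds \<open>|T|\<close>.\<close>

lemma card_add_card_pencil_le:
  assumes B: "finite B" "indep_over UNIV B" "card B = k - 1"
    and Q: "span_over UNIV B \<inter> S = Q" "subspace_over Fq Q" "card Q = q"
    and T: "T \<subseteq> S - Q"
    and T_meet: "\<And>N. subspace_over Fq N \<Longrightarrow> q * card (N \<inter> T) \<le> (q - 1) * card N"
    and no_line: "\<forall>s\<in>T. card (span_over UNIV (insert s B) \<inter> S) \<noteq> q ^ 2"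
  shows "card T + card (pencil B) * (q ^ 2 - q) \<le> q ^ 2 * q ^ E - q"
proof -
  define Bad where "Bad = {W \<in> pencil B. card (W \<inter> S) \<noteq> q ^ 2}"
  have line: "q ^ 2 \<le> card (W \<inter> S)" if "W \<in> pencil B" for W
    by (rule card_pencil_Int_S_ge[OF B that])
  have bad: "card (W \<inter> S \<inter> T) \<le> card (W \<inter> S) - q ^ 2" if W: "W \<in> Bad" for W
  proof -
    obtain v where v: "v \<notin> span_over UNIV B" "W = span_over UNIV (insert v B)"
      using W unfolding Bad_def by (blast elim: pencil_memE)
    have N: "subspace_over Fq (W \<inter> S)"
      unfolding v(2)
      by (rule subspace_over_Int[OF subspace_over_UNIV_imp[OF subspace_span_over[OF is_subfield_UNIV]]
            subspace_S])
    have "Q \<subseteq> W \<inter> S"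
      using Q(1) v(2) span_over_mono[of B "insert v B" UNIV] by auto
    moreover have "q ^ 2 < card (W \<inter> S)"
      using line W unfolding Bad_def by fastforce
    ultimately show ?thesis
      using card_Int_le_card_diff_sq[OF Fq card_Fq Q(2) _ Q(3) N _ T_meet[OF N]] by simp
  qed
  have "T \<subseteq> (\<Union>W\<in>Bad. W \<inter> S \<inter> T)"
  proof
    fix s assume s: "s \<in> T"
    then have "s \<notin> span_over UNIV B" "s \<in> S"
      using T Q(1) by auto
    then have "span_over UNIV (insert s B) \<in> Bad"
      using no_line s unfolding Bad_def by (auto intro: span_over_insert_mem_pencil)
    moreover have "s \<in> span_over UNIV (insert s B)"
      using span_over_superset[of UNIV "insert s B"] by auto
    ultimately show "s \<in> (\<Union>W\<in>Bad. W \<inter> S \<inter> T)"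
      using s \<open>s \<in> S\<close> by blast
  qed
  then have "card T \<le> card (\<Union>W\<in>Bad. W \<inter> S \<inter> T)"
    by (simp add: card_mono)
  also have "\<dots> \<le> (\<Sum>W\<in>Bad. card (W \<inter> S \<inter> T))"
    by (rule card_UN_le) simp
  also have "\<dots> \<le> (\<Sum>W\<in>Bad. card (W \<inter> S) - q ^ 2)"
    by (rule sum_mono) (rule bad)
  also have "\<dots> \<le> (\<Sum>W\<in>pencil B. card (W \<inter> S) - q ^ 2)"
    by (rule sum_mono2) (auto simp: Bad_def)
  finally have T_le: "card T \<le> (\<Sum>W\<in>pencil B. card (W \<inter> S) - q ^ 2)" .
  have "q \<le> q ^ 2"
    using q_ge_2 by (simp add: power2_eq_square)
  then have "(\<Sum>W\<in>pencil B. card (W \<inter> S) - q)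
      = (\<Sum>W\<in>pencil B. (card (W \<inter> S) - q ^ 2) + (q ^ 2 - q))"
    using line by (intro sum.cong) auto
  also have "\<dots> = (\<Sum>W\<in>pencil B. card (W \<inter> S) - q ^ 2) + card (pencil B) * (q ^ 2 - q)"
    by (simp add: sum.distrib)
  finally have "(\<Sum>W\<in>pencil B. card (W \<inter> S) - q ^ 2) + card (pencil B) * (q ^ 2 - q) = q ^ (E + 2) - q"
    using sum_card_pencil_Int_S[OF B(1,2) Q(1,3)] by simp
  moreover have "q ^ (E + 2) = q ^ 2 * q ^ E"
    by (simp only: power_add mult.commute)
  ultimately show ?thesis
    using T_le by linarith
qed

lemma exists_pencil_member_Int_S_line:
  assumes B: "finite B" "indep_over UNIV B" "card B = k - 1"
    and Q: "span_over UNIV B \<inter> S = Q" "subspace_over Fq Q" "card Q = q"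
    and T: "T \<subseteq> S - Q" "card T = 2 * (q * q ^ E - q ^ E)"
    and T_meet: "\<And>N. subspace_over Fq N \<Longrightarrow> q * card (N \<inter> T) \<le> (q - 1) * card N"
  shows "\<exists>s\<in>T. card (span_over UNIV (insert s B) \<inter> S) = q ^ 2"
proof (rule ccontr)
  assume "\<not> ?thesis"
  then have "card T + card (pencil B) * (q ^ 2 - q) \<le> q ^ 2 * q ^ E - q"
    using card_add_card_pencil_le[OF B Q T(1) T_meet] by blast
  moreover have "q \<le> q ^ t" "1 \<le> q ^ E" "0 < q ^ (t * (k - 1))"
    using q_ge_2 t by (simp_all add: self_le_power)
  ultimately show False
    using pencil_count_absurd[OF q_ge_2 _ _ _ card_pencil_eq[OF B] T(2)] by blast
qed

text \<open>A line \<open>\<langle>Q, s\<rangle>\<close> with \<open>Q \<subseteq> \<langle>P, \<Omega>\<rangle>\<close> and \<open>s\<close> on a tangent hyperplane \<open>H\<close> but off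
  \<open>\<langle>P, \<Omega>\<rangle>\<close> lies in \<open>H\<close>, and \<open>H\<close> meets the cone only in \<open>\<langle>P, \<Omega>\<rangle>\<close>.\<close>

lemma Int_K_subset_of_Int_S_eq:
  assumes P: "P \<in> Bb" and Q: "Q \<subseteq> P + \<Omega>"
    and H: "subspace_over Fq H" "P + \<Omega> \<subseteq> H" "K \<inter> H \<subseteq> P + \<Omega>"
    and s: "s \<in> H" "s \<notin> P + \<Omega>" and W: "W \<inter> S = Q + span_over Fq {s}"
  shows "W \<inter> K \<subseteq> Q"
proof
  have P\<Omega>: "subspace_over Fq (P + \<Omega>)"
    by (rule subspace_over_set_plus[OF subspace_Bb[OF P] subspace_\<Omega>])
  fix w assume w: "w \<in> W \<inter> K"
  then have "w \<in> Q + span_over Fq {s}"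
    using W K_subset_S by blast
  then obtain a y where ay: "a \<in> Q" "y \<in> span_over Fq {s}" "w = a + y"
    unfolding set_plus_def by blast
  obtain b where b: "b \<in> Fq" "y = b *s s"
    using ay(2) span_over_singleton[OF Fq] by auto
  show "w \<in> Q"
  proof (cases "b = 0")
    case True
    then show ?thesis
      using ay b by simp
  next
    case False
    have "a \<in> H"
      using ay(1) Q H(2) by blast
    moreover have "y \<in> H"
      using subspace_overD(3)[OF H(1) b(1) s(1)] b(2) by simp
    ultimately have "w \<in> P + \<Omega>"
      using subspace_overD(2)[OF H(1)] ay(3) w H(3) by blast
    then have "w - a \<in> P + \<Omega>"
      using subspace_over_diff[OF Fq P\<Omega>] ay(1) Q by blast
    then have "inverse b *s y \<in> P + \<Omega>"
      using subspace_overD(3)[OF P\<Omega> is_subfieldD(6)[OF Fq b(1)]] ay(3) by simp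
    then have "s \<in> P + \<Omega>"
      using b False by (simp add: vector_smult_assoc)
    then show ?thesis
      using s(2) by blast
  qed
qed

lemma exists_extension_avoiding_cone:
  assumes B: "finite B" "indep_over UNIV B" "card B = k - 1"
    and u: "u \<noteq> 0" and Z_S: "span_over UNIV B \<inter> S = span_over Fq {u}"
    and P: "P \<in> Bb" and u_P: "span_over Fq {u} \<subseteq> P + \<Omega>"
  shows "\<exists>s. s \<notin> span_over UNIV B \<and> span_over UNIV (insert s B) \<inter> K \<subseteq> span_over Fq {u}"
proof -
  define Q where "Q = span_over Fq {u}"
  have Q: "subspace_over Fq Q" "card Q = q"
    unfolding Q_def using subspace_span_over[OF Fq] card_span_over_singleton[OF Fq u] card_Fq by auto
  obtain H1 H2 where H: "subspace_over Fq H1" "subspace_over Fq H2" "H1 \<inter> H2 = P + \<Omega>"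
      "card H1 = q * card (P + \<Omega>)" "card H2 = q * card (P + \<Omega>)" "H1 \<subseteq> S" "H2 \<subseteq> S"
      "K \<inter> H1 \<subseteq> P + \<Omega>" "K \<inter> H2 \<subseteq> P + \<Omega>"
    by (rule tangent_hyperplanes[OF P])
  have P\<Omega>: "subspace_over Fq (P + \<Omega>)" "P + \<Omega> \<subseteq> H1" "P + \<Omega> \<subseteq> H2"
    using subspace_over_set_plus[OF subspace_Bb[OF P] subspace_\<Omega>] H(3) by blast+
  define T where "T = H1 \<union> H2 - (P + \<Omega>)"
  have "T = (H1 - (P + \<Omega>)) \<union> (H2 - (P + \<Omega>))" "(H1 - (P + \<Omega>)) \<inter> (H2 - (P + \<Omega>)) = {}"
    unfolding T_def using H(3) by blast+
  then have "card T = card (H1 - (P + \<Omega>)) + card (H2 - (P + \<Omega>))"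
    by (simp add: card_Un_disjoint)
  also have "\<dots> = 2 * (q * q ^ E - q ^ E)"
    using card_Diff_subset[OF _ P\<Omega>(2)] card_Diff_subset[OF _ P\<Omega>(3)] H(4,5) card_Bb_plus_\<Omega>[OF P]
    by simp
  finally have card_T: "card T = 2 * (q * q ^ E - q ^ E)" .
  have T_S: "T \<subseteq> S - Q"
    unfolding T_def Q_def using H(6,7) u_P by blast
  have T_meet: "q * card (N \<inter> T) \<le> (q - 1) * card N" if "subspace_over Fq N" for N
    unfolding T_def by (rule card_Int_hyperplanes_Diff_le[OF Fq card_Fq that H(1,2) P\<Omega>(1) H(3-5)])
  obtain s where s: "s \<in> T" "card (span_over UNIV (insert s B) \<inter> S) = q ^ 2"
    using exists_pencil_member_Int_S_line[OF B Z_S[folded Q_def] Q T_S card_T T_meet] by blast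
  define W where "W = span_over UNIV (insert s B)"
  have s_S: "s \<in> S" "s \<notin> Q"
    using s(1) T_S by auto
  then have s_Z: "s \<notin> span_over UNIV B"
    using Z_S unfolding Q_def by blast
  have N: "subspace_over Fq (W \<inter> S)"
    unfolding W_def
    by (rule subspace_over_Int[OF subspace_over_UNIV_imp[OF subspace_span_over[OF is_subfield_UNIV]] subspace_S])
  have s_W: "s \<in> W"
    unfolding W_def using span_over_superset[of UNIV "insert s B"] by auto
  have Q_W: "Q \<subseteq> W \<inter> S"
    using Z_S span_over_mono[of B "insert s B" UNIV] unfolding Q_def W_def by blast
  have W_S: "W \<inter> S = Q + span_over Fq {s}"
  proof (rule card_seteq[OF finite, symmetric])
    show "Q + span_over Fq {s} \<subseteq> W \<inter> S"
      using Q_W s_W s_S(1) by (intro set_plus_subset_subspace_over[OF N] span_over_minimal[OF N]) auto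
    show "card (W \<inter> S) \<le> card (Q + span_over Fq {s})"
      using card_set_plus_line[OF Fq Q(1) s_S(2)] card_Fq Q(2) s(2) unfolding W_def
      by (simp add: power2_eq_square)
  qed
  have "W \<inter> K \<subseteq> Q"
    if "s \<in> H'" "subspace_over Fq H'" "P + \<Omega> \<subseteq> H'" "K \<inter> H' \<subseteq> P + \<Omega>" for H'
    by (rule Int_K_subset_of_Int_S_eq[OF P _ that(2-4) that(1) _ W_S]) (use u_P s(1) in \<open>auto simp: Q_def T_def\<close>)
  then have "W \<inter> K \<subseteq> Q"
    using s(1) H(1,2,8,9) P\<Omega>(2,3) unfolding T_def by blast
  then show ?thesis
    using s_Z unfolding W_def Q_def by blast
qed

lemma power_mult_power_le:
  assumes "a + b \<le> c + d"
  shows "q ^ a * q ^ b \<le> q ^ c * q ^ d"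
  using assms q_ge_2 by (simp flip: power_add add: power_increasing)

lemma exists_k_space_Int_S_eq:
  assumes u: "u \<noteq> 0" and line: "q ^ 2 \<le> card (span_over UNIV {u} \<inter> S)"
  shows "\<exists>W. vsub UNIV k W \<and> u \<in> W \<and> W \<inter> S = span_over UNIV {u} \<inter> S"
proof -
  have "q ^ (E + 2) * q ^ (t * j) \<le> q ^ (k * t + E - t) * card (span_over UNIV {u} \<inter> S)" if "j < k" for j
  proof -
    have "t * (j + 1) \<le> t * k"
      using that by (intro mult_le_mono2) simp
    then have "E + 2 + t * j \<le> (k * t + E - t) + 2"
      by (simp add: algebra_simps)
    then have "q ^ (E + 2) * q ^ (t * j) \<le> q ^ (k * t + E - t) * q ^ 2"
      by (rule power_mult_power_le)
    also have "\<dots> \<le> q ^ (k * t + E - t) * card (span_over UNIV {u} \<inter> S)"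
      using line by (rule mult_le_mono2)
    finally show ?thesis .
  qed
  then have "\<exists>B. finite B \<and> indep_over UNIV B \<and> card B = k \<and> u \<in> span_over UNIV B
      \<and> span_over UNIV B \<inter> S = span_over UNIV {u} \<inter> S"
    using k(1) by (intro exists_basis_extension_Int_S_eq[OF u]) simp_all
  then obtain B where B: "finite B" "indep_over UNIV B" "card B = k" "u \<in> span_over UNIV B"
      "span_over UNIV B \<inter> S = span_over UNIV {u} \<inter> S"
    by blast
  then show ?thesis
    using vsub_span_over[OF B(1-3)] by blast
qed

lemma exists_k_space_Int_K_subset:
  assumes P: "P \<in> Bb" and u: "u \<noteq> 0" "span_over Fq {u} \<subseteq> P + \<Omega>"
    and point: "span_over UNIV {u} \<inter> S = span_over Fq {u}"
  shows "\<exists>W. vsub UNIV k W \<and> u \<in> W \<and> W \<inter> K \<subseteq> span_over Fq {u}"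
proof -
  have card_point: "card (span_over UNIV {u} \<inter> S) = q"
    using point card_span_over_singleton[OF Fq u(1)] card_Fq by simp
  have k2: "2 \<le> k"
  proof (rule ccontr)
    assume "\<not> 2 \<le> k"
    then have "k = 1"
      using k(1) by simp
    then have "card (span_over UNIV {u}) = q ^ (t * k)"
      using card_span_over_singleton[OF is_subfield_UNIV u(1)] card_scalars by simp
    then have "q ^ 2 \<le> card (span_over UNIV {u} \<inter> S)"
      by (rule card_Int_S_ge[OF subspace_over_UNIV_imp[OF subspace_span_over[OF is_subfield_UNIV]]])
    then show False
      using card_point power_strict_increasing[of 1 2 q] q_ge_2 by simp
  qed
  have "q ^ (E + 2) * q ^ (t * j) \<le> q ^ (k * t + E - t) * card (span_over UNIV {u} \<inter> S)"
    if "j < k - 1" for j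
  proof -
    have "t * (j + 2) \<le> t * k"
      using that by (intro mult_le_mono2) simp
    then have "E + 2 + t * j \<le> (k * t + E - t) + 1"
      using t by (simp add: algebra_simps)
    then have "q ^ (E + 2) * q ^ (t * j) \<le> q ^ (k * t + E - t) * q ^ 1"
      by (rule power_mult_power_le)
    then show ?thesis
      using card_point by simp
  qed
  then have "\<exists>B. finite B \<and> indep_over UNIV B \<and> card B = k - 1 \<and> u \<in> span_over UNIV B
      \<and> span_over UNIV B \<inter> S = span_over UNIV {u} \<inter> S"
    using k2 by (intro exists_basis_extension_Int_S_eq[OF u(1)]) simp_all
  then obtain B where B: "finite B" "indep_over UNIV B" "card B = k - 1" "u \<in> span_over UNIV B"
      "span_over UNIV B \<inter> S = span_over Fq {u}"
    unfolding point by blast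
  obtain s where s: "s \<notin> span_over UNIV B" "span_over UNIV (insert s B) \<inter> K \<subseteq> span_over Fq {u}"
    using exists_extension_avoiding_cone[OF B(1-3) u(1) B(5) P u(2)] by blast
  have "s \<notin> B"
    using s(1) span_over_superset[of UNIV B] by auto
  then have "vsub UNIV k (span_over UNIV (insert s B))"
    using B(1,3) k2 indep_over_insert[OF is_subfield_UNIV B(2) s(1)] by (intro vsub_span_over) auto
  moreover have "u \<in> span_over UNIV (insert s B)"
    using B(4) span_over_mono[of B "insert s B" UNIV] by auto
  ultimately show ?thesis
    using s(2) by blast
qed

text \<open>If \<open>X\<close> meets \<open>S\<close> in at least a line, \<open>X\<close> is extended without enlarging its
  intersection with \<open>S\<close>; otherwise \<open>X \<inter> S\<close> is a point of the cone, and the last extension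
  vector is taken on a tangent hyperplane.\<close>

lemma exists_k_space_isolating:
  assumes X: "X \<in> spread_B (cone Fq \<Omega> Bb)"
  shows "\<exists>W. vsub UNIV k W \<and> X \<subseteq> W \<and> W \<inter> K \<subseteq> X"
proof -
  obtain P u where P: "P \<in> Bb" and u: "u \<noteq> 0" "span_over Fq {u} \<subseteq> P + \<Omega>" "span_over Fq {u} \<subseteq> X"
      and X_eq: "X = span_over UNIV {u}"
    by (rule spread_B_coneE[OF X])
  have X_sub: "X \<subseteq> W" if "vsub UNIV k W" "u \<in> W" for W
    unfolding X_eq using that vsub_UNIV[of k W] by (intro span_over_minimal) auto
  have Q: "subspace_over Fq (span_over Fq {u})" "span_over Fq {u} \<subseteq> X \<inter> S"
    using subspace_span_over[OF Fq] u(2,3) set_plus_\<Omega>_subset_S Bb_point[OF P] by blast+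
  have XS: "subspace_over Fq (X \<inter> S)"
    unfolding X_eq
    by (rule subspace_over_Int[OF subspace_over_UNIV_imp[OF subspace_span_over[OF is_subfield_UNIV]] subspace_S])
  consider "q ^ 2 \<le> card (X \<inter> S)" | "X \<inter> S = span_over Fq {u}"
  proof (cases "X \<inter> S = span_over Fq {u}")
    case True
    then show ?thesis
      by (rule that(2))
  next
    case False
    then obtain y where "y \<in> X \<inter> S" "y \<notin> span_over Fq {u}"
      using Q(2) by blast
    then have "card Fq * card (span_over Fq {u}) \<le> card (X \<inter> S)"
      by (rule card_scalars_mult_card_le[OF Fq Q(1) XS Q(2)])
    then have "q ^ 2 \<le> card (X \<inter> S)"
      using card_span_over_singleton[OF Fq u(1)] card_Fq by (simp add: power2_eq_square)
    then show ?thesis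
      by (rule that(1))
  qed
  then show ?thesis
  proof cases
    case 1
    then obtain W where "vsub UNIV k W" "u \<in> W" "W \<inter> S = X \<inter> S"
      using exists_k_space_Int_S_eq[OF u(1)] unfolding X_eq by blast
    then show ?thesis
      using X_sub K_subset_S by blast
  next
    case 2
    then obtain W where "vsub UNIV k W" "u \<in> W" "W \<inter> K \<subseteq> span_over Fq {u}"
      using exists_k_space_Int_K_subset[OF P u(1,2)] unfolding X_eq by blast
    then show ?thesis
      using X_sub u(3) by blast
  qed
qed

lemma spread_B_cone_unique_in:
  assumes X: "X \<in> proj_points UNIV" "X \<subseteq> W" "W \<inter> K \<subseteq> X"
    and X': "X' \<in> spread_B (cone Fq \<Omega> Bb)" "X' \<subseteq> W"
  shows "X' = X"
proof -
  obtain P u where P: "P \<in> Bb" and u: "u \<noteq> 0" "span_over Fq {u} \<subseteq> P + \<Omega>" "span_over Fq {u} \<subseteq> X'"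
      and X'_eq: "X' = span_over UNIV {u}"
    by (rule spread_B_coneE[OF X'(1)])
  have "u \<in> span_over Fq {u}"
    using span_over_superset[OF is_subfieldD(2)[OF Fq], of "{u}"] by auto
  then have "u \<in> W \<inter> K"
    using u(2,3) X'(2) P unfolding K_def by blast
  then have "u \<in> X"
    using X(3) by blast
  moreover obtain x where "x \<noteq> 0" "X = span_over UNIV {x}"
    using vsub_1_E[OF is_subfield_UNIV] X(1) unfolding proj_points_def by blast
  ultimately show ?thesis
    using span_over_singleton_eq[OF is_subfield_UNIV _ u(1)] X'_eq by simp
qed

lemma minimal_blocking_spread_B_cone:
  "minimal_blocking (proj_points UNIV) {W. vsub UNIV k W} (spread_B (cone Fq \<Omega> Bb))"
  unfolding minimal_blocking_def
proof (intro conjI allI impI blocking_spread_B_cone)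
  fix A' assume A': "A' \<subset> spread_B (cone Fq \<Omega> Bb)"
  then obtain X where X: "X \<in> spread_B (cone Fq \<Omega> Bb)" "X \<notin> A'"
    by blast
  obtain W where W: "vsub UNIV k W" "X \<subseteq> W" "W \<inter> K \<subseteq> X"
    using exists_k_space_isolating[OF X(1)] by blast
  have "X \<in> proj_points UNIV"
    using X(1) unfolding spread_B_def by blast
  then have "X' \<notin> A'" if "X' \<subseteq> W" for X'
    using spread_B_cone_unique_in[OF _ W(2,3) _ that] A' X(2) by blast
  then show "\<not> blocking (proj_points UNIV) {W. vsub UNIV k W} A'"
    using W(1) unfolding blocking_def by blast
qed

end

theorem theorem4p4:
  fixes q t k :: nat
    and \<Omega> \<Gamma> :: "('a::{field,finite} ^ 'n) set"
    and Bb :: "('a ^ 'n) set set"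
  defines "Fq \<equiv> subfield_q q :: 'a set"
  defines "n \<equiv> CARD('n)"
  assumes "\<exists>p e. prime p \<and> e > 0 \<and> q = p ^ e"
    and "t > 0" and "k > 0" and "k < n"
    and "CARD('a) = q ^ t"
    and \<Omega>: "vsub Fq (n * t - k * t - 1) \<Omega>"
    and \<Gamma>: "vsub Fq 3 \<Gamma>"
    and skew: "\<Gamma> \<inter> \<Omega> = {0}"
    and minB: "minimal_blocking {P \<in> proj_points Fq. P \<subseteq> \<Gamma>}
                 {L. vsub Fq 2 L \<and> L \<subseteq> \<Gamma>} Bb"
    and tang: "\<forall>P\<in>Bb. card {L. vsub Fq 2 L \<and> L \<subseteq> \<Gamma> \<and> P \<subseteq> L
                              \<and> card {R\<in>Bb. R \<subseteq> L} = 1} \<ge> 2"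
  shows "minimal_blocking (proj_points UNIV) {W. vsub UNIV k W}
           (spread_B (cone Fq \<Omega> Bb))"
proof -
  obtain p e where pe: "prime p" "0 < e" "q = p ^ e"
    using assms(3) by blast
  have q: "2 \<le> q"
    using prime_ge_2_nat[OF pe(1)] self_le_power[of p e] pe by simp
  have "CHAR('a) = p"
    using CHAR_finite_field_eq_prime[OF pe(1), of "e * t"] pe(2,3) assms(4,7) by (simp add: power_mult)
  then have "is_subfield Fq"
    unfolding Fq_def using is_subfield_subfield_q[where 'a = 'a, of q e] pe by simp
  moreover have "card Fq = q"
    unfolding Fq_def by (rule card_subfield_q[OF q assms(4,7)])
  ultimately interpret field_reduction_cone q t k "n * t - k * t" Fq \<Omega> \<Gamma> Bb
    using assms(4-7) \<Omega> \<Gamma> skew minB tang by unfold_locales (simp_all add: n_def)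
  show ?thesis
    by (rule minimal_blocking_spread_B_cone)
qed

end
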